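(* Let $\varphi$ be a consistent family of foliage grafts for a nonincreasing foliage tree $\mathbf F$, and let $\mathbf H=\mathrm{fhybr}(\mathbf F,\varphi)$. Then: (a) $\mathbf H$ is nonincreasing; (b) if $\mathbf F$ and each $\mathbf G\in\varphi$ are splittable, then $\mathbf H$ is splittable; (c) if $\mathbf F$ and each $\mathbf G\in\varphi$ are locally strict, then $\mathbf H$ is locally strict; (d) if $\mathbf F$ is complete and splittable and each $\mathbf G\in\varphi$ has bounded chains, then $\mathbf H$ is complete; and if $\mathbf F$ has strict branches and is splittable and each $\mathbf G\in\varphi$ has bounded chains, then $\mathbf H$ has strict branches; (e) if $\mathbf F$ and each $\mathbf G\in\varphi$ are open in a space $X$, then $\mathbf H$ is open in the subspace $X\setminus\mathrm{loss}(\mathbf F,\varphi)$ of $X$.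
   Context: Trees: a tree is a pair $(Q,<)$ with $<$ irreflexive transitive and predecessor sets well-ordered; $\parallel$ = incomparable; $\mathrm{sons}(x)$ = immediate successors; $\max$ = maximal nodes; $0$ = least node; chain, branch (maximal chain); bounded chains: every nonempty chain has an upper bound node; $A{\downarrow}=\{v:\exists a\in A\ a\le v\}$; for an antichain $A$ and $x\in A{\downarrow}$, $\mathrm{root}(x,A)$ is the unique $r\in A$, $r\le x$. A graft for a tree $\mathcal T$ is a tree $\mathcal G$ with more than one node, least node $0_{\mathcal G}\in\mathrm{nodes}\,\mathcal T$, $\max\mathcal G\subseteq\{v\in\mathrm{nodes}\,\mathcal T:v>_{\mathcal T}0_{\mathcal G}\}$ an antichain in $\mathcal T$, and $\mathrm{impl}\,\mathcal G:=\mathrm{nodes}\,\mathcal G\setminus(\{0_{\mathcal G}\}\cup\max\mathcal G)$ disjoint from $\mathrm{nodes}\,\mathcal T$; $\mathrm{expl}(\mathcal T,\mathcal G)=\{v:v>_{\mathcal T}0_{\mathcal G}\}\setminus(\max\mathcal G){\downarrow}_{\mathcal T}$. A consistent family $\gamma$ of grafts for $\mathcal T$: members are grafts with pairwise disjoint implants and for distinct $\mathcal D,\mathcal E$: $0_{\mathcal D}\parallel_{\mathcal T}0_{\mathcal E}$ or $0_{\mathcal D}\in(\max\mathcal E){\downarrow}_{\mathcal T}$ or $0_{\mathcal E}\in(\max\mathcal D){\downarrow}_{\mathcal T}$. $\mathrm{supp}(\mathcal T,\gamma)=\mathrm{nodes}\,\mathcal T\setminus\bigcup_{\mathcal G\in\gamma}\mathrm{expl}(\mathcal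 T,\mathcal G)$. $\mathrm{hybr}(\mathcal T,\gamma)$ is the tree on $\mathrm{supp}(\mathcal T,\gamma)\cup\bigcup_{\mathcal G\in\gamma}\mathrm{impl}\,\mathcal G$ with $x<y$ iff: (b1) $x,y\in\mathrm{supp}$, $x<_{\mathcal T}y$; (b2) $x,y\in\mathrm{impl}\,\mathcal G$, $x<_{\mathcal G}y$; (b3) $x\in\mathrm{supp}$, $y\in\mathrm{impl}\,\mathcal G$, $x\le_{\mathcal T}0_{\mathcal G}$; (b4) $x\in\mathrm{impl}\,\mathcal G$, $y\in\mathrm{supp}\cap(\max\mathcal G){\downarrow}_{\mathcal T}$, $x<_{\mathcal G}\mathrm{root}_{\mathcal T}(y,\max\mathcal G)$; or (b5) $x\in\mathrm{impl}\,\mathcal D$, $y\in\mathrm{impl}\,\mathcal E$ ($\mathcal D\neq\mathcal E$), $0_{\mathcal E}\in(\max\mathcal D){\downarrow}_{\mathcal T}$, $x<_{\mathcal D}\mathrm{root}_{\mathcal T}(0_{\mathcal E},\max\mathcal D)$. Foliage trees: $\mathbf F=(\mathcal T,l)$ with $\mathcal T$ a tree (skeleton $\mathrm{skel}\,\mathbf F$) and leaves $\mathbf F_x=l(x)$; tree notions for $\mathbf F$ refer to the skeleton; $\mathrm{fruit}_{\mathbf F}(A)=\bigcap_{x\in A}\mathbf F_x$. $\mathbf F$ is nonincreasing if $x\le y\Rightarrow\mathbf F_y\subseteq\mathbf F_x$; splittable if incomparable nodes have disjoint leaves; locally strict if each non-maximal $\mathbf F_x$ is the union of the pairwise disjoint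 family $(\mathbf F_s)_{s\in\mathrm{sons}(x)}$; complete if it has a node and every branch has nonempty fruit; has strict branches if it has a node and every branch has singleton fruit; open in $X$ if all leaves are open in $X$. A foliage graft for nonincreasing $\mathbf F$ is a nonincreasing foliage tree $\mathbf G$ such that $\mathrm{skel}\,\mathbf G$ is a graft for $\mathrm{skel}\,\mathbf F$, $\mathbf G_{0_{\mathbf G}}\subseteq\mathbf F_{0_{\mathbf G}}$, and $\mathbf G_m=\mathbf F_m$ for all $m\in\max\mathbf G$; $\mathrm{cut}(\mathbf F,\mathbf G)=\mathbf F_{0_{\mathbf G}}\setminus\mathbf G_{0_{\mathbf G}}$. $\varphi$ is a consistent family of foliage grafts for $\mathbf F$ if each member is a foliage graft for $\mathbf F$, distinct members have distinct skeletons, and $\{\mathrm{skel}\,\mathbf G:\mathbf G\in\varphi\}$ is a consistent family of grafts for $\mathrm{skel}\,\mathbf F$; $\mathrm{loss}(\mathbf F,\varphi)=\bigcup_{\mathbf G\in\varphi}\mathrm{cut}(\mathbf F,\mathbf G)$; $\mathrm{supp}(\mathbf F,\varphi)=\mathrm{supp}(\mathrm{skel}\,\mathbf F,\{\mathrm{skel}\,\mathbf G:\mathbf G\in\varphi\})$. The foliage hybrid $\mathrm{fhybr}(\mathbf F,\varphi)$ is the foliage tree $\mathbf H$ with skeleton $\mathrm{hybr}(\mathrm{skel}\,\mathbf F,\{\mathrm{skel}\,\mathbf G:\mathbf G\in\varphi\})$ and leaves $\mathbf H_x=\mathbf G_x\setminus\mathrm{loss}(\mathbf F,\varphi)$ if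 $x\in\mathrm{impl}\,\mathbf G$ for some $\mathbf G\in\varphi$, and $\mathbf H_x=\mathbf F_x\setminus\mathrm{loss}(\mathbf F,\varphi)$ if $x\in\mathrm{supp}(\mathbf F,\varphi)$. *)

theory Defs
  imports "HOL-Analysis.Analysis"
begin

record 'n ptree =
  tnodes :: "'n set"
  tless  :: "'n \<Rightarrow> 'n \<Rightarrow> bool"

definition is_tree :: "'n ptree \<Rightarrow> bool" where
  "is_tree T \<longleftrightarrow>
     (\<forall>x y. tless T x y \<longrightarrow> x \<in> tnodes T \<and> y \<in> tnodes T) \<and>
     (\<forall>x. \<not> tless T x x) \<and>
     (\<forall>x y z. tless T x y \<longrightarrow> tless T y z \<longrightarrow> tless T x z) \<and>
     (\<forall>x \<in> tnodes T.
        (\<forall>a b. tless T a x \<longrightarrow> tless T b x \<longrightarrow> a = b \<or> tless T a b \<or> tless T b a) \<and>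
        (\<forall>S. S \<subseteq> {y. tless T y x} \<longrightarrow> S \<noteq> {} \<longrightarrow>
             (\<exists>m \<in> S. \<forall>s \<in> S. s \<noteq> m \<longrightarrow> tless T m s)))"

definition tle :: "'n ptree \<Rightarrow> 'n \<Rightarrow> 'n \<Rightarrow> bool" where
  "tle T x y \<longleftrightarrow> tless T x y \<or> (x = y \<and> x \<in> tnodes T)"

definition incomp :: "'n ptree \<Rightarrow> 'n \<Rightarrow> 'n \<Rightarrow> bool" where
  "incomp T x y \<longleftrightarrow> x \<in> tnodes T \<and> y \<in> tnodes T \<and> \<not> tle T x y \<and> \<not> tle T y x"

definition sons :: "'n ptree \<Rightarrow> 'n \<Rightarrow> 'n set" where
  "sons T x = {y \<in> tnodes T. tless T x y \<and> \<not> (\<exists>z. tless T x z \<and> tless T z y)}"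

definition tmax :: "'n ptree \<Rightarrow> 'n set" where
  "tmax T = {x \<in> tnodes T. \<not> (\<exists>y. tless T x y)}"

definition has_least :: "'n ptree \<Rightarrow> bool" where
  "has_least T \<longleftrightarrow> (\<exists>r \<in> tnodes T. \<forall>y \<in> tnodes T. tle T r y)"

definition troot :: "'n ptree \<Rightarrow> 'n" where
  "troot T = (THE r. r \<in> tnodes T \<and> (\<forall>y \<in> tnodes T. tle T r y))"

definition is_chain :: "'n ptree \<Rightarrow> 'n set \<Rightarrow> bool" where
  "is_chain T C \<longleftrightarrow> C \<subseteq> tnodes T \<and> (\<forall>x \<in> C. \<forall>y \<in> C. tle T x y \<or> tle T y x)"

definition is_branch :: "'n ptree \<Rightarrow> 'n set \<Rightarrow> bool" where
  "is_branch T B \<longleftrightarrow> is_chain T B \<and> (\<forall>C. is_chain T C \<longrightarrow> B \<subseteq> C \<longrightarrow> C = B)"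

definition bounded_chains :: "'n ptree \<Rightarrow> bool" where
  "bounded_chains T \<longleftrightarrow>
     (\<forall>C. is_chain T C \<longrightarrow> C \<noteq> {} \<longrightarrow> (\<exists>u \<in> tnodes T. \<forall>c \<in> C. tle T c u))"

definition is_antichain :: "'n ptree \<Rightarrow> 'n set \<Rightarrow> bool" where
  "is_antichain T A \<longleftrightarrow> A \<subseteq> tnodes T \<and> (\<forall>x \<in> A. \<forall>y \<in> A. x \<noteq> y \<longrightarrow> incomp T x y)"

text \<open>The set written $A{\downarrow}$ in the paper: all nodes above some element of A.\<close>
definition dcl :: "'n ptree \<Rightarrow> 'n set \<Rightarrow> 'n set" where
  "dcl T A = {v \<in> tnodes T. \<exists>a \<in> A. tle T a v}"

definition rootin :: "'n ptree \<Rightarrow> 'n \<Rightarrow> 'n set \<Rightarrow> 'n" where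
  "rootin T x A = (THE r. r \<in> A \<and> tle T r x)"

definition impl :: "'n ptree \<Rightarrow> 'n set" where
  "impl G = tnodes G - ({troot G} \<union> tmax G)"

definition is_graft :: "'n ptree \<Rightarrow> 'n ptree \<Rightarrow> bool" where
  "is_graft T G \<longleftrightarrow> is_tree G \<and>
     (\<exists>x \<in> tnodes G. \<exists>y \<in> tnodes G. x \<noteq> y) \<and>
     has_least G \<and> troot G \<in> tnodes T \<and>
     tmax G \<subseteq> {v \<in> tnodes T. tless T (troot G) v} \<and>
     is_antichain T (tmax G) \<and>
     impl G \<inter> tnodes T = {}"

definition expl :: "'n ptree \<Rightarrow> 'n ptree \<Rightarrow> 'n set" where
  "expl T G = {v. tless T (troot G) v} - dcl T (tmax G)"

definition consistent_grafts :: "'n ptree \<Rightarrow> 'n ptree set \<Rightarrow> bool" where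
  "consistent_grafts T \<gamma> \<longleftrightarrow>
     (\<forall>G \<in> \<gamma>. is_graft T G) \<and>
     (\<forall>D \<in> \<gamma>. \<forall>E \<in> \<gamma>. D \<noteq> E \<longrightarrow>
        impl D \<inter> impl E = {} \<and>
        (incomp T (troot D) (troot E) \<or> troot D \<in> dcl T (tmax E) \<or> troot E \<in> dcl T (tmax D)))"

definition supp :: "'n ptree \<Rightarrow> 'n ptree set \<Rightarrow> 'n set" where
  "supp T \<gamma> = tnodes T - (\<Union>G \<in> \<gamma>. expl T G)"

definition hybr :: "'n ptree \<Rightarrow> 'n ptree set \<Rightarrow> 'n ptree" where
  "hybr T \<gamma> =
     \<lparr> tnodes = supp T \<gamma> \<union> (\<Union>G \<in> \<gamma>. impl G),
       tless = (\<lambda>x y.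
          (x \<in> supp T \<gamma> \<and> y \<in> supp T \<gamma> \<and> tless T x y) \<or>
          (\<exists>G \<in> \<gamma>. x \<in> impl G \<and> y \<in> impl G \<and> tless G x y) \<or>
          (\<exists>G \<in> \<gamma>. x \<in> supp T \<gamma> \<and> y \<in> impl G \<and> tle T x (troot G)) \<or>
          (\<exists>G \<in> \<gamma>. x \<in> impl G \<and> y \<in> supp T \<gamma> \<and> y \<in> dcl T (tmax G) \<and>
                    tless G x (rootin T y (tmax G))) \<or>
          (\<exists>D \<in> \<gamma>. \<exists>E \<in> \<gamma>. D \<noteq> E \<and> x \<in> impl D \<and> y \<in> impl E \<and>
                    troot E \<in> dcl T (tmax D) \<and>
                    tless D x (rootin T (troot E) (tmax D)))) \<rparr>"

type_synonym ('n, 'a) ftree = "'n ptree \<times> ('n \<Rightarrow> 'a set)"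

abbreviation skel :: "('n, 'a) ftree \<Rightarrow> 'n ptree" where "skel F \<equiv> fst F"
abbreviation leaf :: "('n, 'a) ftree \<Rightarrow> 'n \<Rightarrow> 'a set" where "leaf F x \<equiv> snd F x"

definition foliage_tree :: "('n, 'a) ftree \<Rightarrow> bool" where
  "foliage_tree F \<longleftrightarrow> is_tree (skel F)"

definition fruit :: "('n, 'a) ftree \<Rightarrow> 'n set \<Rightarrow> 'a set" where
  "fruit F A = (\<Inter>x \<in> A. leaf F x)"

definition nonincreasing :: "('n, 'a) ftree \<Rightarrow> bool" where
  "nonincreasing F \<longleftrightarrow> (\<forall>x y. tle (skel F) x y \<longrightarrow> leaf F y \<subseteq> leaf F x)"

definition splittable :: "('n, 'a) ftree \<Rightarrow> bool" where
  "splittable F \<longleftrightarrow> (\<forall>x y. incomp (skel F) x y \<longrightarrow> leaf F x \<inter> leaf F y = {})"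

definition locally_strict :: "('n, 'a) ftree \<Rightarrow> bool" where
  "locally_strict F \<longleftrightarrow>
     (\<forall>x \<in> tnodes (skel F) - tmax (skel F).
        leaf F x = (\<Union>s \<in> sons (skel F) x. leaf F s) \<and>
        (\<forall>s \<in> sons (skel F) x. \<forall>t \<in> sons (skel F) x. s \<noteq> t \<longrightarrow> leaf F s \<inter> leaf F t = {}))"

definition complete :: "('n, 'a) ftree \<Rightarrow> bool" where
  "complete F \<longleftrightarrow> tnodes (skel F) \<noteq> {} \<and>
     (\<forall>B. is_branch (skel F) B \<longrightarrow> fruit F B \<noteq> {})"

definition strict_branches :: "('n, 'a) ftree \<Rightarrow> bool" where
  "strict_branches F \<longleftrightarrow> tnodes (skel F) \<noteq> {} \<and>
     (\<forall>B. is_branch (skel F) B \<longrightarrow> (\<exists>p. fruit F B = {p}))"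

definition open_in :: "'a topology \<Rightarrow> ('n, 'a) ftree \<Rightarrow> bool" where
  "open_in X F \<longleftrightarrow> (\<forall>x \<in> tnodes (skel F). openin X (leaf F x))"

definition foliage_graft :: "('n, 'a) ftree \<Rightarrow> ('n, 'a) ftree \<Rightarrow> bool" where
  "foliage_graft F G \<longleftrightarrow>
     foliage_tree G \<and> nonincreasing G \<and>
     is_graft (skel F) (skel G) \<and>
     leaf G (troot (skel G)) \<subseteq> leaf F (troot (skel G)) \<and>
     (\<forall>m \<in> tmax (skel G). leaf G m = leaf F m)"

definition cut :: "('n, 'a) ftree \<Rightarrow> ('n, 'a) ftree \<Rightarrow> 'a set" where
  "cut F G = leaf F (troot (skel G)) - leaf G (troot (skel G))"

definition consistent_fgrafts :: "('n, 'a) ftree \<Rightarrow> ('n, 'a) ftree set \<Rightarrow> bool" where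
  "consistent_fgrafts F \<phi> \<longleftrightarrow>
     (\<forall>G \<in> \<phi>. foliage_graft F G) \<and>
     inj_on skel \<phi> \<and>
     consistent_grafts (skel F) (skel ` \<phi>)"

definition loss :: "('n, 'a) ftree \<Rightarrow> ('n, 'a) ftree set \<Rightarrow> 'a set" where
  "loss F \<phi> = (\<Union>G \<in> \<phi>. cut F G)"

definition fsupp :: "('n, 'a) ftree \<Rightarrow> ('n, 'a) ftree set \<Rightarrow> 'n set" where
  "fsupp F \<phi> = supp (skel F) (skel ` \<phi>)"

definition fhybr :: "('n, 'a) ftree \<Rightarrow> ('n, 'a) ftree set \<Rightarrow> ('n, 'a) ftree" where
  "fhybr F \<phi> =
     (hybr (skel F) (skel ` \<phi>),
      (\<lambda>x. if x \<in> fsupp F \<phi> then leaf F x - loss F \<phi>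
           else leaf (SOME G. G \<in> \<phi> \<and> x \<in> impl (skel G)) x - loss F \<phi>))"

end

theory Submission
  imports Defs
begin

text \<open>On the support the hybrid order is that of \<open>T\<close>, on an implant that of its graft, and the
  remaining clauses route every passage between them through the root or a maximal node of a graft.
  Hence a graft sits convexly in the hybrid: a path leaving an implant passes through a maximal node
  of its graft. So the sons of a graft root or implant node are its sons in the graft, and the sons
  of any other support node are its sons in \<open>T\<close>. Since the leaves of graft and tree agree at
  roots and maximal nodes up to the loss, comparing leaves gives monotonicity, splittability, local
  strictness and openness. For a hybrid branch \<open>B\<close>, the nodes of \<open>T\<close> below the support nodes
  of \<open>B\<close> form a branch of \<open>T\<close>; by splittability its fruit avoids the loss and equals the fruit
  of \<open>B\<close>, which gives completeness and strictness of branches.\<close>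

section \<open>Trees\<close>

lemma is_chain_Union:
  assumes "\<And>C. C \<in> \<C> \<Longrightarrow> is_chain R C" and "\<And>C D. C \<in> \<C> \<Longrightarrow> D \<in> \<C> \<Longrightarrow> C \<subseteq> D \<or> D \<subseteq> C"
  shows "is_chain R (\<Union>\<C>)"
  unfolding is_chain_def
proof (intro conjI ballI)
  show "\<Union>\<C> \<subseteq> tnodes R" using assms(1) unfolding is_chain_def by blast
  fix x y assume "x \<in> \<Union>\<C>" "y \<in> \<Union>\<C>"
  then obtain C D where "C \<in> \<C>" "D \<in> \<C>" "x \<in> C" "y \<in> D" by blast
  then have "x \<in> C \<and> y \<in> C \<or> x \<in> D \<and> y \<in> D" using assms(2) by blast
  then show "tle R x y \<or> tle R y x"
    using assms(1) \<open>C \<in> \<C>\<close> \<open>D \<in> \<C>\<close> unfolding is_chain_def by blast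
qed

lemma is_chain_insert_upper:
  "is_chain R C \<Longrightarrow> w \<in> tnodes R \<Longrightarrow> \<forall>c \<in> C. tle R c w \<Longrightarrow> is_chain R (insert w C)"
  unfolding is_chain_def tle_def by auto

lemma is_branch_nodes: "is_branch R B \<Longrightarrow> a \<in> B \<Longrightarrow> a \<in> tnodes R"
  unfolding is_branch_def is_chain_def by blast

lemma is_branch_comparable:
  "is_branch R B \<Longrightarrow> a \<in> B \<Longrightarrow> b \<in> B \<Longrightarrow> a = b \<or> tless R a b \<or> tless R b a"
  unfolding is_branch_def is_chain_def tle_def by blast

lemma is_branch_insert:
  assumes B: "is_branch R B" and a: "a \<in> tnodes R"
    and comparable: "\<And>b. b \<in> B \<Longrightarrow> a = b \<or> tless R a b \<or> tless R b a"
  shows "a \<in> B"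
proof -
  have "is_chain R (insert a B)"
    using B a comparable unfolding is_branch_def is_chain_def tle_def by blast
  then show ?thesis using B unfolding is_branch_def by blast
qed

locale tree =
  fixes R :: "'n ptree"
  assumes is_tree: "is_tree R"
begin

lemma tless_imp_tle: "tless R x y \<Longrightarrow> tle R x y"
  unfolding tle_def by blast

lemma tle_refl: "x \<in> tnodes R \<Longrightarrow> tle R x x"
  unfolding tle_def by blast

lemma tle_cases: "tle R x y \<Longrightarrow> x = y \<or> tless R x y"
  unfolding tle_def by blast

lemma tless_nodes: "tless R x y \<Longrightarrow> x \<in> tnodes R \<and> y \<in> tnodes R"
  using is_tree unfolding is_tree_def by blast

lemma tless_irrefl: "\<not> tless R x x"
  using is_tree unfolding is_tree_def by blast

lemma tless_trans: "tless R x y \<Longrightarrow> tless R y z \<Longrightarrow> tless R x z"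
  using is_tree unfolding is_tree_def by blast

lemma tless_asym: "tless R x y \<Longrightarrow> \<not> tless R y x"
  using tless_trans tless_irrefl by blast

lemma tless_linear_below: "tless R a c \<Longrightarrow> tless R b c \<Longrightarrow> a = b \<or> tless R a b \<or> tless R b a"
  using is_tree tless_nodes unfolding is_tree_def by blast

lemma tle_nodes: "tle R x y \<Longrightarrow> x \<in> tnodes R \<and> y \<in> tnodes R"
  unfolding tle_def using tless_nodes by blast

lemma tle_trans: "tle R x y \<Longrightarrow> tle R y z \<Longrightarrow> tle R x z"
  unfolding tle_def using tless_trans by blast

lemma tle_tless_trans: "tle R x y \<Longrightarrow> tless R y z \<Longrightarrow> tless R x z"
  unfolding tle_def using tless_trans by blast

lemma tless_tle_trans: "tless R x y \<Longrightarrow> tle R y z \<Longrightarrow> tless R x z"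
  unfolding tle_def using tless_trans by blast

lemma tle_linear_below: "tle R a c \<Longrightarrow> tle R b c \<Longrightarrow> tle R a b \<or> tle R b a"
  unfolding tle_def using tless_linear_below tless_nodes by blast

lemma tle_antisym: "tle R a b \<Longrightarrow> tle R b a \<Longrightarrow> a = b"
  unfolding tle_def using tless_asym by blast

lemma dclI: "m \<in> A \<Longrightarrow> tle R m y \<Longrightarrow> y \<in> dcl R A"
  unfolding dcl_def using tle_nodes by blast

lemma troot_least:
  assumes "has_least R"
  shows "troot R \<in> tnodes R \<and> (\<forall>y \<in> tnodes R. tle R (troot R) y)"
proof -
  obtain r where r: "r \<in> tnodes R" "\<forall>y \<in> tnodes R. tle R r y"
    using assms unfolding has_least_def by blast
  have "troot R = r" unfolding troot_def
    by (rule the_equality) (use r tle_antisym in blast)+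
  then show ?thesis using r by simp
qed

text \<open>Zorn's lemma gives a maximal chain through \<open>u\<close>; its upper bound lies on it and is maximal.\<close>

lemma bounded_chains_tmax_above:
  assumes bc: "bounded_chains R" and u: "u \<in> tnodes R"
  shows "\<exists>m \<in> tmax R. tle R u m"
proof -
  let ?A = "{C. is_chain R C \<and> u \<in> C}"
  have "\<exists>M\<in>?A. \<forall>X\<in>?A. M \<subseteq> X \<longrightarrow> X = M"
  proof (rule Zorn_Lemma2, rule ballI)
    fix \<C> assume \<C>: "\<C> \<in> chains ?A"
    show "\<exists>U\<in>?A. \<forall>X\<in>\<C>. X \<subseteq> U"
    proof (cases "\<C> = {}")
      case True
      have "{u} \<in> ?A" using u unfolding is_chain_def tle_def by auto
      then show ?thesis using True by blast
    next
      case False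
      have "is_chain R (\<Union>\<C>)"
        using \<C> by (intro is_chain_Union) (auto simp: chains_def chain_subset_def)
      moreover have "u \<in> \<Union>\<C>" using False \<C> unfolding chains_def by blast
      ultimately show ?thesis by blast
    qed
  qed
  then obtain M where M: "is_chain R M" "u \<in> M"
    and M_max: "\<And>X. is_chain R X \<Longrightarrow> u \<in> X \<Longrightarrow> M \<subseteq> X \<Longrightarrow> X = M"
    by blast
  obtain v where v: "v \<in> tnodes R" "\<forall>c \<in> M. tle R c v"
    using bc M unfolding bounded_chains_def by blast
  have "v \<in> tmax R"
    unfolding tmax_def
  proof (safe)
    show "v \<in> tnodes R" by fact
    fix w assume w: "tless R v w"
    have "\<forall>c \<in> M. tle R c w" using v tle_trans[OF _ tless_imp_tle[OF w]] by blast
    then have "insert w M = M"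
      using M_max[OF is_chain_insert_upper[OF M(1)]] M(2) tless_nodes[OF w] by blast
    then have "tle R w v" using v by blast
    then show False using w tle_tless_trans tless_irrefl by blast
  qed
  then show ?thesis using v M by blast
qed

end

section \<open>Hybrids of trees\<close>

lemma impl_incomp_tmax:
  "y \<in> impl g \<Longrightarrow> m \<in> tmax g \<Longrightarrow> \<not> tless g y m \<Longrightarrow> incomp g y m"
  unfolding impl_def tmax_def incomp_def tle_def by blast

locale graft_family = tree T for T :: "'n ptree" +
  fixes \<Gamma> :: "'n ptree set"
  assumes consistent: "consistent_grafts T \<Gamma>"
begin

abbreviation "S \<equiv> supp T \<Gamma>"
abbreviation "Hy \<equiv> hybr T \<Gamma>"
abbreviation "hless \<equiv> tless (hybr T \<Gamma>)"

text \<open>The next facts fix the node type of \<open>g\<close> to that of \<open>T\<close>: \<open>blast\<close> does not instantiate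
  type variables of polymorphic facts.\<close>

lemma implD: "x \<in> impl (g :: 'n ptree) \<Longrightarrow> x \<in> tnodes g \<and> x \<noteq> troot g \<and> x \<notin> tmax g"
  unfolding impl_def by blast

lemma impl_nodes: "x \<in> impl (g :: 'n ptree) \<Longrightarrow> x \<in> tnodes g"
  unfolding impl_def by blast

lemma graft_node_cases: "x \<in> tnodes (g :: 'n ptree) \<Longrightarrow> x = troot g \<or> x \<in> impl g \<or> x \<in> tmax g"
  unfolding impl_def by blast

lemma tmaxD: "m \<in> tmax (g :: 'n ptree) \<Longrightarrow> m \<in> tnodes g \<and> \<not> tless g m y"
  unfolding tmax_def by blast

lemma graft: "g \<in> \<Gamma> \<Longrightarrow> is_graft T g"
  using consistent unfolding consistent_grafts_def by blast

lemma graft_tree: "g \<in> \<Gamma> \<Longrightarrow> tree g"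
  using graft unfolding is_graft_def by (blast intro: tree.intro)

lemma graft_root: "g \<in> \<Gamma> \<Longrightarrow> troot g \<in> tnodes g \<and> (\<forall>y\<in>tnodes g. tle g (troot g) y)"
  using graft tree.troot_least[OF graft_tree] unfolding is_graft_def by blast

lemma graft_root_node: "g \<in> \<Gamma> \<Longrightarrow> troot g \<in> tnodes T"
  using graft unfolding is_graft_def by blast

lemma graft_tmax: "g \<in> \<Gamma> \<Longrightarrow> m \<in> tmax g \<Longrightarrow> m \<in> tnodes T \<and> tless T (troot g) m"
  using graft unfolding is_graft_def by blast

lemma graft_tmax_eq: "g \<in> \<Gamma> \<Longrightarrow> m1 \<in> tmax g \<Longrightarrow> m2 \<in> tmax g \<Longrightarrow> tle T m1 m2 \<Longrightarrow> m1 = m2"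
  using graft unfolding is_graft_def is_antichain_def incomp_def by blast

lemma impl_notin_nodes: "g \<in> \<Gamma> \<Longrightarrow> x \<in> impl g \<Longrightarrow> x \<notin> tnodes T"
  using graft unfolding is_graft_def by blast

lemma graft_root_less: "g \<in> \<Gamma> \<Longrightarrow> x \<in> tnodes g \<Longrightarrow> x \<noteq> troot g \<Longrightarrow> tless g (troot g) x"
  using graft_root unfolding tle_def by blast

lemma graft_root_notin_tmax: "g \<in> \<Gamma> \<Longrightarrow> troot g \<notin> tmax g"
proof
  assume a: "g \<in> \<Gamma>" "troot g \<in> tmax g"
  obtain x y where "x \<in> tnodes g" "y \<in> tnodes g" "x \<noteq> y"
    using graft[OF a(1)] unfolding is_graft_def by blast
  then obtain z where "z \<in> tnodes g" "z \<noteq> troot g" by blast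
  then have "tless g (troot g) z" using graft_root_less a by blast
  then show False using a(2) unfolding tmax_def by blast
qed

lemma graft_root_less_tmax: "g \<in> \<Gamma> \<Longrightarrow> m \<in> tmax g \<Longrightarrow> tless g (troot g) m"
  using graft_root_less graft_root_notin_tmax tmaxD by metis

lemma rootin_eq: "g \<in> \<Gamma> \<Longrightarrow> m \<in> tmax g \<Longrightarrow> tle T m y \<Longrightarrow> rootin T y (tmax g) = m"
  unfolding rootin_def
proof (rule the_equality)
  assume "g \<in> \<Gamma>" "m \<in> tmax g" "tle T m y"
  then show "m \<in> tmax g \<and> tle T m y" by blast
  fix r assume a: "r \<in> tmax g \<and> tle T r y"
  then have "tle T r m \<or> tle T m r" using tle_linear_below \<open>tle T m y\<close> by blast
  then show "r = m" using graft_tmax_eq \<open>g \<in> \<Gamma>\<close> \<open>m \<in> tmax g\<close> a by metis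
qed

lemma rootin_tmax: "g \<in> \<Gamma> \<Longrightarrow> y \<in> dcl T (tmax g) \<Longrightarrow>
   rootin T y (tmax g) \<in> tmax g \<and> tle T (rootin T y (tmax g)) y"
proof -
  assume a: "g \<in> \<Gamma>" "y \<in> dcl T (tmax g)"
  then obtain m where "m \<in> tmax g" "tle T m y" unfolding dcl_def by blast
  then show ?thesis using rootin_eq[OF a(1)] by metis
qed

lemma dcl_tmax_above_root: "g \<in> \<Gamma> \<Longrightarrow> y \<in> dcl T (tmax g) \<Longrightarrow> tless T (troot g) y"
  using rootin_tmax graft_tmax tle_def tless_tle_trans by metis

lemma rootin_upward:
  assumes g: "g \<in> \<Gamma>" and y: "y \<in> dcl T (tmax g)" and yz: "tle T y z"
  shows "z \<in> dcl T (tmax g) \<and> rootin T z (tmax g) = rootin T y (tmax g)"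
proof -
  have m: "rootin T y (tmax g) \<in> tmax g" "tle T (rootin T y (tmax g)) y"
    using rootin_tmax[OF g y] by blast+
  then have "tle T (rootin T y (tmax g)) z" using yz tle_trans by blast
  then show ?thesis using m dclI rootin_eq[OF g m(1)] by blast
qed

lemma consistent_pair: "D \<in> \<Gamma> \<Longrightarrow> E \<in> \<Gamma> \<Longrightarrow> D \<noteq> E \<Longrightarrow> impl D \<inter> impl E = {} \<and>
   (incomp T (troot D) (troot E) \<or> troot D \<in> dcl T (tmax E) \<or> troot E \<in> dcl T (tmax D))"
  using consistent unfolding consistent_grafts_def by blast

lemma impl_unique: "D \<in> \<Gamma> \<Longrightarrow> E \<in> \<Gamma> \<Longrightarrow> x \<in> impl D \<Longrightarrow> x \<in> impl E \<Longrightarrow> D = E"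
  using consistent_pair by blast

lemma graft_roots_distinct: "D \<in> \<Gamma> \<Longrightarrow> E \<in> \<Gamma> \<Longrightarrow> D \<noteq> E \<Longrightarrow> troot D \<noteq> troot E"
proof
  assume a: "D \<in> \<Gamma>" "E \<in> \<Gamma>" "D \<noteq> E" "troot D = troot E"
  from consistent_pair[OF a(1-3)] show False
  proof (elim conjE disjE)
    assume "incomp T (troot D) (troot E)" then show False
      using a(4) unfolding incomp_def tle_def by blast
  next
    assume "troot D \<in> dcl T (tmax E)" then show False
      using dcl_tmax_above_root[OF a(2)] a(4) tless_irrefl by metis
  next
    assume "troot E \<in> dcl T (tmax D)" then show False
      using dcl_tmax_above_root[OF a(1)] a(4) tless_irrefl by metis
  qed
qed

lemma supp_iff: "x \<in> S \<longleftrightarrow> x \<in> tnodes T \<and> (\<forall>g\<in>\<Gamma>. tless T (troot g) x \<longrightarrow> x \<in> dcl T (tmax g))"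
  unfolding supp_def expl_def by blast

lemma supp_above_root_dcl: "x \<in> S \<Longrightarrow> g \<in> \<Gamma> \<Longrightarrow> tless T (troot g) x \<Longrightarrow> x \<in> dcl T (tmax g)"
  using supp_iff by blast

lemma supp_nodes: "x \<in> S \<Longrightarrow> x \<in> tnodes T"
  using supp_iff by blast

lemma supp_notin_impl: "x \<in> S \<Longrightarrow> g \<in> \<Gamma> \<Longrightarrow> x \<notin> impl g"
  using supp_nodes impl_notin_nodes by blast

lemma graft_root_supp: "g \<in> \<Gamma> \<Longrightarrow> troot g \<in> S"
  unfolding supp_iff
proof (intro conjI ballI impI)
  assume g: "g \<in> \<Gamma>"
  then show "troot g \<in> tnodes T" using graft_root_node by blast
  fix E assume E: "E \<in> \<Gamma>" "tless T (troot E) (troot g)"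
  have "E \<noteq> g" using E tless_irrefl by blast
  from consistent_pair[OF g E(1) this[symmetric]] show "troot g \<in> dcl T (tmax E)"
  proof (elim conjE disjE)
    assume "incomp T (troot g) (troot E)" then show ?thesis
      using E unfolding incomp_def tle_def by blast
  qed (use dcl_tmax_above_root[OF g] E tless_asym in blast)+
qed

lemma graft_tmax_supp: "g \<in> \<Gamma> \<Longrightarrow> m \<in> tmax g \<Longrightarrow> m \<in> S"
  unfolding supp_iff
proof (intro conjI ballI impI)
  assume g: "g \<in> \<Gamma>" and m: "m \<in> tmax g"
  then show "m \<in> tnodes T" using graft_tmax by blast
  fix E assume E: "E \<in> \<Gamma>" "tless T (troot E) m"
  show "m \<in> dcl T (tmax E)"
  proof (cases "E = g")
    case True then show ?thesis using m dclI graft_tmax[OF g m] unfolding tle_def by blast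
  next
    case False
    have gm: "tless T (troot g) m" using graft_tmax[OF g m] by blast
    from consistent_pair[OF g E(1) False[symmetric]] show ?thesis
    proof (elim conjE disjE)
      assume "incomp T (troot g) (troot E)"
      then show ?thesis using E gm tless_linear_below unfolding incomp_def tle_def by metis
    next
      assume "troot g \<in> dcl T (tmax E)"
      then obtain m' where "m' \<in> tmax E" "tle T m' (troot g)" using rootin_tmax[OF E(1)] by blast
      then show ?thesis using dclI gm tle_def tless_tle_trans tle_tless_trans by metis
    next
      assume "troot E \<in> dcl T (tmax g)"
      then obtain m' where m': "m' \<in> tmax g" "tle T m' (troot E)" using rootin_tmax[OF g] by blast
      then have "tless T m' m" using E tle_tless_trans by blast
      then have "m' = m" using graft_tmax_eq[OF g m' (1) m] unfolding tle_def by blast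
      then show ?thesis using \<open>tless T m' m\<close> tless_irrefl by blast
    qed
  qed
qed

lemma hybr_nodes: "x \<in> tnodes Hy \<longleftrightarrow> x \<in> S \<or> (\<exists>g\<in>\<Gamma>. x \<in> impl g)"
  unfolding hybr_def by simp

lemma hless_iff: "hless x y \<longleftrightarrow>
          (x \<in> S \<and> y \<in> S \<and> tless T x y) \<or>
          (\<exists>G \<in> \<Gamma>. x \<in> impl G \<and> y \<in> impl G \<and> tless G x y) \<or>
          (\<exists>G \<in> \<Gamma>. x \<in> S \<and> y \<in> impl G \<and> tle T x (troot G)) \<or>
          (\<exists>G \<in> \<Gamma>. x \<in> impl G \<and> y \<in> S \<and> y \<in> dcl T (tmax G) \<and>
                    tless G x (rootin T y (tmax G))) \<or>
          (\<exists>D \<in> \<Gamma>. \<exists>E \<in> \<Gamma>. D \<noteq> E \<and> x \<in> impl D \<and> y \<in> impl E \<and>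
                    troot E \<in> dcl T (tmax D) \<and>
                    tless D x (rootin T (troot E) (tmax D)))"
  unfolding hybr_def by simp

lemma impl_eq_iff: "g \<in> \<Gamma> \<Longrightarrow> x \<in> impl g \<Longrightarrow> G \<in> \<Gamma> \<Longrightarrow> x \<in> impl G \<longleftrightarrow> G = g"
  using impl_unique by blast

lemma impl_notin_supp: "g \<in> \<Gamma> \<Longrightarrow> x \<in> impl g \<Longrightarrow> x \<notin> S"
  using supp_notin_impl by blast

text \<open>In the names of the following case lemmas, \<open>S\<close> stands for a support node and \<open>I\<close> for an
  implant node, listed in the order of the variables.\<close>

lemma hless_SS: "x \<in> S \<Longrightarrow> y \<in> S \<Longrightarrow> hless x y \<longleftrightarrow> tless T x y"
proof -
  assume a: "x \<in> S" "y \<in> S"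
  then have "\<forall>G\<in>\<Gamma>. x \<notin> impl G \<and> y \<notin> impl G" using supp_notin_impl by blast
  then show ?thesis using a unfolding hless_iff by auto
qed

lemma hless_II: "g \<in> \<Gamma> \<Longrightarrow> x \<in> impl g \<Longrightarrow> y \<in> impl g \<Longrightarrow> hless x y \<longleftrightarrow> tless g x y"
proof -
  assume a: "g \<in> \<Gamma>" "x \<in> impl g" "y \<in> impl g"
  have "x \<notin> S" "y \<notin> S" using a impl_notin_supp by blast+
  moreover have "\<And>G. G \<in> \<Gamma> \<Longrightarrow> x \<in> impl G \<longleftrightarrow> G = g" "\<And>G. G \<in> \<Gamma> \<Longrightarrow> y \<in> impl G \<longleftrightarrow> G = g"
    using a impl_eq_iff by blast+
  ultimately show ?thesis using a unfolding hless_iff by auto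
qed

lemma hless_SI: "g \<in> \<Gamma> \<Longrightarrow> x \<in> S \<Longrightarrow> y \<in> impl g \<Longrightarrow> hless x y \<longleftrightarrow> tle T x (troot g)"
proof -
  assume a: "g \<in> \<Gamma>" "x \<in> S" "y \<in> impl g"
  have "y \<notin> S" using a impl_notin_supp by blast+
  moreover have "\<And>G. G \<in> \<Gamma> \<Longrightarrow> x \<notin> impl G" "\<And>G. G \<in> \<Gamma> \<Longrightarrow> y \<in> impl G \<longleftrightarrow> G = g"
    using a impl_eq_iff supp_notin_impl by blast+
  ultimately show ?thesis using a unfolding hless_iff by auto
qed

lemma hless_IS: "g \<in> \<Gamma> \<Longrightarrow> x \<in> impl g \<Longrightarrow> y \<in> S \<Longrightarrow>
   hless x y \<longleftrightarrow> y \<in> dcl T (tmax g) \<and> tless g x (rootin T y (tmax g))"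
proof -
  assume a: "g \<in> \<Gamma>" "x \<in> impl g" "y \<in> S"
  have "x \<notin> S" using a impl_notin_supp by blast+
  moreover have "\<And>G. G \<in> \<Gamma> \<Longrightarrow> y \<notin> impl G" "\<And>G. G \<in> \<Gamma> \<Longrightarrow> x \<in> impl G \<longleftrightarrow> G = g"
    using a impl_eq_iff supp_notin_impl by blast+
  ultimately show ?thesis using a unfolding hless_iff by auto
qed

lemma hless_II_distinct: "D \<in> \<Gamma> \<Longrightarrow> E \<in> \<Gamma> \<Longrightarrow> D \<noteq> E \<Longrightarrow> x \<in> impl D \<Longrightarrow> y \<in> impl E \<Longrightarrow>
   hless x y \<longleftrightarrow> troot E \<in> dcl T (tmax D) \<and> tless D x (rootin T (troot E) (tmax D))"
proof -
  assume a: "D \<in> \<Gamma>" "E \<in> \<Gamma>" "D \<noteq> E" "x \<in> impl D" "y \<in> impl E"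
  have "x \<notin> S" "y \<notin> S" using a impl_notin_supp by blast+
  moreover have "\<And>G. G \<in> \<Gamma> \<Longrightarrow> x \<in> impl G \<longleftrightarrow> G = D" "\<And>G. G \<in> \<Gamma> \<Longrightarrow> y \<in> impl G \<longleftrightarrow> G = E"
    using a impl_eq_iff by blast+
  ultimately show ?thesis using a unfolding hless_iff by auto
qed

lemma hless_nodes: "hless x y \<Longrightarrow> x \<in> tnodes Hy \<and> y \<in> tnodes Hy"
  unfolding hless_iff hybr_nodes by blast

lemma hybr_node_cases:
  "x \<in> tnodes Hy \<Longrightarrow> (x \<in> S \<Longrightarrow> P) \<Longrightarrow> (\<And>g. g \<in> \<Gamma> \<Longrightarrow> x \<in> impl g \<Longrightarrow> P) \<Longrightarrow> P"
  using hybr_nodes by blast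

lemma hless_trans_SSS: "x \<in> S \<Longrightarrow> y \<in> S \<Longrightarrow> z \<in> S \<Longrightarrow> hless x y \<Longrightarrow> hless y z \<Longrightarrow> hless x z"
  using hless_SS tless_trans by blast

lemma hless_trans_SSI:
  assumes E: "E \<in> \<Gamma>" and x: "x \<in> S" and y: "y \<in> S" and z: "z \<in> impl E"
    and xy: "hless x y" and yz: "hless y z"
  shows "hless x z"
proof -
  have "tless T x y" using hless_SS[OF x y] xy by blast
  moreover have "tle T y (troot E)" using hless_SI[OF E y z] yz by blast
  ultimately have "tle T x (troot E)" using tless_imp_tle tless_tle_trans by blast
  then show ?thesis using hless_SI[OF E x z] by blast
qed

lemma hless_trans_SIS:
  assumes E: "E \<in> \<Gamma>" and x: "x \<in> S" and y: "y \<in> impl E" and z: "z \<in> S"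
    and xy: "hless x y" and yz: "hless y z"
  shows "hless x z"
proof -
  have "tle T x (troot E)" using hless_SI[OF E x y] xy by blast
  moreover have "tless T (troot E) z" using hless_IS[OF E y z] yz dcl_tmax_above_root[OF E] by blast
  ultimately show ?thesis using hless_SS[OF x z] tle_tless_trans by blast
qed

lemma hless_trans_SII:
  assumes D: "D \<in> \<Gamma>" and E: "E \<in> \<Gamma>" and x: "x \<in> S" and y: "y \<in> impl D" and z: "z \<in> impl E"
    and xy: "hless x y" and yz: "hless y z"
  shows "hless x z"
proof -
  have xD: "tle T x (troot D)" using hless_SI[OF D x y] xy by blast
  show ?thesis
  proof (cases "D = E")
    case False
    then have "troot E \<in> dcl T (tmax D)" using hless_II_distinct[OF D E False y z] yz by blast
    then have "tless T (troot D) (troot E)" by (rule dcl_tmax_above_root[OF D])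
    then show ?thesis using hless_SI[OF E x z] xD tle_tless_trans tless_imp_tle by blast
  qed (use hless_SI[OF E x z] xD in blast)
qed

lemma hless_trans_ISS:
  assumes D: "D \<in> \<Gamma>" and x: "x \<in> impl D" and y: "y \<in> S" and z: "z \<in> S"
    and xy: "hless x y" and yz: "hless y z"
  shows "hless x z"
proof -
  have y_dcl: "y \<in> dcl T (tmax D)" "tless D x (rootin T y (tmax D))"
    using hless_IS[OF D x y] xy by blast+
  have "tle T y z" using hless_SS[OF y z] yz tless_imp_tle by blast
  then show ?thesis using rootin_upward[OF D y_dcl(1)] y_dcl(2) hless_IS[OF D x z] by auto
qed

lemma hless_trans_ISI:
  assumes D: "D \<in> \<Gamma>" and E: "E \<in> \<Gamma>" and x: "x \<in> impl D" and y: "y \<in> S" and z: "z \<in> impl E"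
    and xy: "hless x y" and yz: "hless y z"
  shows "hless x z"
proof -
  have y_dcl: "y \<in> dcl T (tmax D)" "tless D x (rootin T y (tmax D))"
    using hless_IS[OF D x y] xy by blast+
  have yE: "tle T y (troot E)" using hless_SI[OF E y z] yz by blast
  show ?thesis
  proof (cases "D = E")
    case True
    have "tless T (troot D) y" by (rule dcl_tmax_above_root[OF D y_dcl(1)])
    then show ?thesis using True yE tless_tle_trans tless_irrefl by blast
  next
    case False
    then show ?thesis
      using rootin_upward[OF D y_dcl(1) yE] y_dcl(2) hless_II_distinct[OF D E False x z] by auto
  qed
qed

lemma hless_trans_IIS:
  assumes D: "D \<in> \<Gamma>" and E: "E \<in> \<Gamma>" and x: "x \<in> impl D" and y: "y \<in> impl E" and z: "z \<in> S"
    and xy: "hless x y" and yz: "hless y z"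
  shows "hless x z"
proof -
  have z_dcl: "z \<in> dcl T (tmax E)" "tless E y (rootin T z (tmax E))"
    using hless_IS[OF E y z] yz by blast+
  show ?thesis
  proof (cases "D = E")
    case True
    then have "tless E x (rootin T z (tmax E))"
      using hless_II[OF E _ y] x xy z_dcl(2) tree.tless_trans[OF graft_tree[OF E]] by blast
    then show ?thesis using hless_IS[OF D x z] z_dcl(1) True by blast
  next
    case False
    then have r: "troot E \<in> dcl T (tmax D)" "tless D x (rootin T (troot E) (tmax D))"
      using hless_II_distinct[OF D E False x y] xy by blast+
    have "tle T (troot E) z" using dcl_tmax_above_root[OF E z_dcl(1)] tless_imp_tle by blast
    then show ?thesis using rootin_upward[OF D r(1)] r(2) hless_IS[OF D x z] by auto
  qed
qed

lemma hless_trans_III: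
  assumes D: "D \<in> \<Gamma>" and E: "E \<in> \<Gamma>" and F: "F \<in> \<Gamma>"
    and x: "x \<in> impl D" and y: "y \<in> impl E" and z: "z \<in> impl F"
    and xy: "hless x y" and yz: "hless y z"
  shows "hless x z"
proof (cases "D = E")
  case DE: True
  then have x': "x \<in> impl E" and xy': "tless E x y" using x hless_II[OF E _ y] xy by blast+
  show ?thesis
  proof (cases "E = F")
    case True
    then show ?thesis
      using hless_II[OF E x'] hless_II[OF E y] z yz xy' tree.tless_trans[OF graft_tree[OF E]]
        by blast
  next
    case False
    then show ?thesis
      using hless_II_distinct[OF E F False x'] hless_II_distinct[OF E F False y z] yz xy' DE z
        tree.tless_trans[OF graft_tree[OF E]] by blast
  qed
next
  case DE: False
  then have r: "troot E \<in> dcl T (tmax D)" "tless D x (rootin T (troot E) (tmax D))"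
    using hless_II_distinct[OF D E DE x y] xy by blast+
  show ?thesis
  proof (cases "E = F")
    case True
    then show ?thesis using hless_II_distinct[OF D F _ x z] DE r by blast
  next
    case EF: False
    then have EF_lt: "tless T (troot E) (troot F)"
      using hless_II_distinct[OF E F EF y z] yz dcl_tmax_above_root[OF E] by blast
    have "tless T (troot D) (troot E)" by (rule dcl_tmax_above_root[OF D r(1)])
    then have "D \<noteq> F" using EF_lt tless_asym by blast
    then show ?thesis
      using rootin_upward[OF D r(1) tless_imp_tle[OF EF_lt]] r(2) hless_II_distinct[OF D F _ x z]
        by auto
  qed
qed

lemma hless_trans:
  assumes xy: "hless x y" and yz: "hless y z"
  shows "hless x z"
proof -
  have n: "x \<in> tnodes Hy" "y \<in> tnodes Hy" "z \<in> tnodes Hy" using hless_nodes xy yz by blast+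
  show ?thesis
  proof (rule hybr_node_cases[OF n(1)]; rule hybr_node_cases[OF n(2)];
      rule hybr_node_cases[OF n(3)])
    assume "x \<in> S" "y \<in> S" "z \<in> S"
    then show ?thesis using hless_trans_SSS xy yz by blast
  next
    fix F assume "x \<in> S" "y \<in> S" "F \<in> \<Gamma>" "z \<in> impl F"
    then show ?thesis using hless_trans_SSI xy yz by blast
  next
    fix E assume "x \<in> S" "E \<in> \<Gamma>" "y \<in> impl E" "z \<in> S"
    then show ?thesis using hless_trans_SIS xy yz by blast
  next
    fix E F assume "x \<in> S" "E \<in> \<Gamma>" "y \<in> impl E" "F \<in> \<Gamma>" "z \<in> impl F"
    then show ?thesis using hless_trans_SII xy yz by blast
  next
    fix D assume "D \<in> \<Gamma>" "x \<in> impl D" "y \<in> S" "z \<in> S"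
    then show ?thesis using hless_trans_ISS xy yz by blast
  next
    fix D F assume "D \<in> \<Gamma>" "x \<in> impl D" "y \<in> S" "F \<in> \<Gamma>" "z \<in> impl F"
    then show ?thesis using hless_trans_ISI xy yz by blast
  next
    fix D E assume "D \<in> \<Gamma>" "x \<in> impl D" "E \<in> \<Gamma>" "y \<in> impl E" "z \<in> S"
    then show ?thesis using hless_trans_IIS xy yz by blast
  next
    fix D E F assume "D \<in> \<Gamma>" "x \<in> impl D" "E \<in> \<Gamma>" "y \<in> impl E" "F \<in> \<Gamma>" "z \<in> impl F"
    then show ?thesis using hless_trans_III xy yz by blast
  qed
qed

lemma hless_linear_S_SS:
  assumes "c \<in> S" "a \<in> S" "b \<in> S" "hless a c" "hless b c"
  shows "a = b \<or> hless a b \<or> hless b a"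
  using hless_SS assms tless_linear_below by metis

lemma hless_linear_I_SS:
  assumes "F \<in> \<Gamma>" "c \<in> impl F" "a \<in> S" "b \<in> S" "hless a c" "hless b c"
  shows "a = b \<or> hless a b \<or> hless b a"
proof -
  have "tle T a (troot F)" "tle T b (troot F)" using hless_SI assms by blast+
  then have "tle T a b \<or> tle T b a" using tle_linear_below by blast
  then show ?thesis using hless_SS assms(3,4) tle_cases by metis
qed

lemma hless_linear_S_SI:
  assumes A: "E \<in> \<Gamma>" "c \<in> S" "a \<in> S" "b \<in> impl E" "hless a c" "hless b c"
  shows "hless a b \<or> hless b a"
proof -
  have ac: "tless T a c" using hless_SS A by blast
  have bc: "c \<in> dcl T (tmax E)" "tless E b (rootin T c (tmax E))" using hless_IS A by blast+
  have Ec: "tless T (troot E) c" using dcl_tmax_above_root A bc by blast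
  from tless_linear_below[OF ac Ec] show ?thesis
  proof (elim disjE)
    assume "a = troot E" then show ?thesis using hless_SI A tle_refl graft_root_node by metis
  next
    assume "tless T a (troot E)" then show ?thesis using hless_SI A tless_imp_tle by blast
  next
    assume Ea: "tless T (troot E) a"
    then have ad: "a \<in> dcl T (tmax E)" using supp_above_root_dcl A by blast
    have "rootin T c (tmax E) = rootin T a (tmax E)"
      using rootin_upward[OF A(1) ad] ac tless_imp_tle by blast
    then show ?thesis using hless_IS A ad bc by auto
  qed
qed

lemma hless_linear_S_II:
  assumes A: "D \<in> \<Gamma>" "E \<in> \<Gamma>" "c \<in> S" "a \<in> impl D" "b \<in> impl E" "hless a c" "hless b c"
  shows "a = b \<or> hless a b \<or> hless b a"
proof -
  have ac: "c \<in> dcl T (tmax D)" "tless D a (rootin T c (tmax D))" using hless_IS A by blast+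
  have bc: "c \<in> dcl T (tmax E)" "tless E b (rootin T c (tmax E))" using hless_IS A by blast+
  show ?thesis
  proof (cases "D = E")
    case True
    then have "a = b \<or> tless D a b \<or> tless D b a"
      using tree.tless_linear_below[OF graft_tree[OF A(1)] ac(2)] bc by blast
    then show ?thesis using hless_II A True by blast
  next
    case False
    have Dc: "tless T (troot D) c" using dcl_tmax_above_root A ac by blast
    have Ec: "tless T (troot E) c" using dcl_tmax_above_root A bc by blast
    from consistent_pair[OF A(1,2) False] show ?thesis
    proof (elim conjE disjE)
      assume "incomp T (troot D) (troot E)"
      then show ?thesis using tless_linear_below[OF Dc Ec] unfolding incomp_def tle_def by blast
    next
      assume d: "troot D \<in> dcl T (tmax E)"
      have "rootin T c (tmax E) = rootin T (troot D) (tmax E)"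
        using rootin_upward[OF A(2) d] Dc tless_imp_tle by blast
      then show ?thesis using hless_II_distinct[OF A(2,1) False[symmetric] A(5,4)] d bc by auto
    next
      assume d: "troot E \<in> dcl T (tmax D)"
      have "rootin T c (tmax D) = rootin T (troot E) (tmax D)"
        using rootin_upward[OF A(1) d] Ec tless_imp_tle by blast
      then show ?thesis using hless_II_distinct[OF A(1,2) False A(4,5)] d ac by auto
    qed
  qed
qed

lemma hless_linear_I_SI:
  assumes A: "E \<in> \<Gamma>" "F \<in> \<Gamma>" "c \<in> impl F" "a \<in> S" "b \<in> impl E" "hless a c" "hless b c"
  shows "hless a b \<or> hless b a"
proof -
  have aF: "tle T a (troot F)" using hless_SI A by blast
  show ?thesis
  proof (cases "E = F")
    case True then show ?thesis using aF hless_SI A by blast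
  next
    case False
    then have bF: "troot F \<in> dcl T (tmax E)" "tless E b (rootin T (troot F) (tmax E))"
      using hless_II_distinct A by blast+
    have Fs: "troot F \<in> S" using graft_root_supp A by blast
    have bF': "hless b (troot F)" using hless_IS[OF A(1,5) Fs] bF by blast
    from tle_cases[OF aF] show ?thesis
    proof
      assume "a = troot F" then show ?thesis using bF' by blast
    next
      assume "tless T a (troot F)"
      then have "hless a (troot F)" using hless_SS A Fs by blast
      then show ?thesis using hless_linear_S_SI[OF A(1) Fs A(4,5) _ bF'] by blast
    qed
  qed
qed

lemma hless_linear_I_II:
  assumes A: "D \<in> \<Gamma>" "E \<in> \<Gamma>" "F \<in> \<Gamma>" "c \<in> impl F" "a \<in> impl D" "b \<in> impl E"
    "hless a c" "hless b c"
  shows "a = b \<or> hless a b \<or> hless b a"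
proof -
  have Fs: "troot F \<in> S" using graft_root_supp A by blast
  show ?thesis
  proof (cases "D = F")
    case DF: True
    show ?thesis
    proof (cases "E = F")
      case True
      then have "tless F a c" "tless F b c" using hless_II A DF by blast+
      then have "a = b \<or> tless F a b \<or> tless F b a"
        using tree.tless_linear_below[OF graft_tree[OF A(3)]] by blast
      then show ?thesis using hless_II A DF True by blast
    next
      case False
      then have "troot F \<in> dcl T (tmax E)" "tless E b (rootin T (troot F) (tmax E))"
        using hless_II_distinct A by blast+
      then have "hless b a" using hless_II_distinct[OF A(2,1)] A DF False by auto
      then show ?thesis by blast
    qed
  next
    case DF: False
    then have aF: "troot F \<in> dcl T (tmax D)" "tless D a (rootin T (troot F) (tmax D))"
      using hless_II_distinct A by blast+
    show ?thesis
    proof (cases "E = F")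
      case True
      then have "hless a b" using hless_II_distinct[OF A(1,2)] A DF aF by auto
      then show ?thesis by blast
    next
      case False
      then have bF: "troot F \<in> dcl T (tmax E)" "tless E b (rootin T (troot F) (tmax E))"
        using hless_II_distinct A by blast+
      have "hless a (troot F)" "hless b (troot F)" using hless_IS A Fs aF bF by blast+
      then show ?thesis using hless_linear_S_II[OF A(1,2) Fs A(5,6)] by blast
    qed
  qed
qed

lemma hless_linear_below:
  assumes ac: "hless a c" and bc: "hless b c"
  shows "a = b \<or> hless a b \<or> hless b a"
proof -
  have n: "a \<in> tnodes Hy" "b \<in> tnodes Hy" "c \<in> tnodes Hy" using hless_nodes ac bc by blast+
  show ?thesis
  proof (rule hybr_node_cases[OF n(1)]; rule hybr_node_cases[OF n(2)];
      rule hybr_node_cases[OF n(3)])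
    assume "a \<in> S" "b \<in> S" "c \<in> S"
    then show ?thesis using hless_linear_S_SS ac bc by blast
  next
    fix F assume "a \<in> S" "b \<in> S" "F \<in> \<Gamma>" "c \<in> impl F"
    then show ?thesis using hless_linear_I_SS ac bc by blast
  next
    fix E assume "a \<in> S" "E \<in> \<Gamma>" "b \<in> impl E" "c \<in> S"
    then show ?thesis using hless_linear_S_SI ac bc by blast
  next
    fix E F assume "a \<in> S" "E \<in> \<Gamma>" "b \<in> impl E" "F \<in> \<Gamma>" "c \<in> impl F"
    then show ?thesis using hless_linear_I_SI ac bc by blast
  next
    fix D assume "D \<in> \<Gamma>" "a \<in> impl D" "b \<in> S" "c \<in> S"
    then show ?thesis using hless_linear_S_SI[of D c b a] ac bc by blast
  next
    fix D F assume "D \<in> \<Gamma>" "a \<in> impl D" "b \<in> S" "F \<in> \<Gamma>" "c \<in> impl F"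
    then show ?thesis using hless_linear_I_SI[of D F c b a] ac bc by blast
  next
    fix D E assume "D \<in> \<Gamma>" "a \<in> impl D" "E \<in> \<Gamma>" "b \<in> impl E" "c \<in> S"
    then show ?thesis using hless_linear_S_II ac bc by blast
  next
    fix D E F assume "D \<in> \<Gamma>" "a \<in> impl D" "E \<in> \<Gamma>" "b \<in> impl E" "F \<in> \<Gamma>" "c \<in> impl F"
    then show ?thesis using hless_linear_I_II ac bc by blast
  qed
qed

lemma graft_inner_cases:
  "x \<in> tnodes g - tmax g \<Longrightarrow> (x = troot g \<Longrightarrow> P) \<Longrightarrow> (x \<in> impl g \<Longrightarrow> P) \<Longrightarrow> P"
  unfolding impl_def by blast

lemma graft_nonroot_cases:
  "x \<in> tnodes g - {troot g} \<Longrightarrow> (x \<in> impl g \<Longrightarrow> P) \<Longrightarrow> (x \<in> tmax g \<Longrightarrow> P) \<Longrightarrow> P"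
  unfolding impl_def by blast

lemma graft_tmax_nonroot: "g \<in> \<Gamma> \<Longrightarrow> m \<in> tmax g \<Longrightarrow> m \<in> tnodes g - {troot g}"
  using graft_root_notin_tmax tmaxD by blast

lemma graft_above_nonroot: "g \<in> \<Gamma> \<Longrightarrow> tless g x s \<Longrightarrow> s \<in> tnodes g - {troot g}"
proof -
  assume g: "g \<in> \<Gamma>" and xs: "tless g x s"
  interpret g: tree g by (rule graft_tree[OF g])
  have "tle g (troot g) x" using graft_root[OF g] g.tless_nodes[OF xs] by blast
  then have "tless g (troot g) s" using g.tle_tless_trans xs by blast
  then show ?thesis using g.tless_irrefl g.tless_nodes by blast
qed

lemma graft_below_inner: "g \<in> \<Gamma> \<Longrightarrow> tless g x s \<Longrightarrow> x \<in> tnodes g - tmax g"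
  unfolding tmax_def using tree.tless_nodes[OF graft_tree] by blast

lemma hless_within_graft:
  assumes g: "g \<in> \<Gamma>" and x: "x \<in> tnodes g - tmax g" and y: "y \<in> tnodes g - {troot g}"
  shows "hless x y \<longleftrightarrow> tless g x y"
  using x
proof (rule graft_inner_cases)
  assume x_root: "x = troot g"
  have "tless g (troot g) y" using graft_root_less[OF g] y by blast
  moreover have "hless (troot g) y"
    using y
  proof (rule graft_nonroot_cases)
    assume "y \<in> impl g"
    then show ?thesis
      using hless_SI[OF g graft_root_supp[OF g]] tle_refl[OF graft_root_node[OF g]] by blast
  next
    assume "y \<in> tmax g"
    then show ?thesis
      using hless_SS[OF graft_root_supp[OF g] graft_tmax_supp[OF g]] graft_tmax[OF g] by blast
  qed
  ultimately show ?thesis using x_root by blast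
next
  assume x_impl: "x \<in> impl g"
  from y show ?thesis
  proof (rule graft_nonroot_cases)
    assume "y \<in> impl g"
    then show ?thesis by (rule hless_II[OF g x_impl])
  next
    assume m: "y \<in> tmax g"
    have yT: "y \<in> tnodes T" using graft_tmax[OF g m] by blast
    show ?thesis
      using hless_IS[OF g x_impl graft_tmax_supp[OF g m]] dclI[OF m tle_refl[OF yT]]
        rootin_eq[OF g m tle_refl[OF yT]] by simp
  qed
qed

lemma hless_inner_supp:
  assumes g: "g \<in> \<Gamma>" and x: "x \<in> tnodes g - tmax g" and w: "w \<in> S" and xw: "hless x w"
  shows "w \<in> dcl T (tmax g) \<and> tless g x (rootin T w (tmax g))"
  using x
proof (rule graft_inner_cases)
  assume x_root: "x = troot g"
  then have "w \<in> dcl T (tmax g)"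
    using hless_SS[OF graft_root_supp[OF g] w] xw supp_above_root_dcl[OF w g] by blast
  then show ?thesis using x_root graft_root_less_tmax[OF g] rootin_tmax[OF g] by blast
next
  assume "x \<in> impl g"
  then show ?thesis using hless_IS[OF g _ w] xw by blast
qed

lemma hless_inner_impl:
  assumes g: "g \<in> \<Gamma>" and x: "x \<in> tnodes g - tmax g" and E: "E \<in> \<Gamma>" "E \<noteq> g"
    and w: "w \<in> impl E" and xw: "hless x w"
  shows "troot E \<in> dcl T (tmax g) \<and> tless g x (rootin T (troot E) (tmax g))"
  using x
proof (rule graft_inner_cases)
  assume x_root: "x = troot g"
  have "tle T (troot g) (troot E)"
    using hless_SI[OF E(1) graft_root_supp[OF g] w] xw x_root by blast
  then have "tless T (troot g) (troot E)"
    using graft_roots_distinct[OF g E(1)] E(2) tle_cases by metis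
  then have "troot E \<in> dcl T (tmax g)" by (rule supp_above_root_dcl[OF graft_root_supp[OF E(1)] g])
  then show ?thesis using x_root graft_root_less_tmax[OF g] rootin_tmax[OF g] by blast
next
  assume "x \<in> impl g"
  then show ?thesis using hless_II_distinct[OF g E(1) E(2)[symmetric] _ w] xw by blast
qed

lemma hless_leaving_graft:
  assumes g: "g \<in> \<Gamma>" and x: "x \<in> tnodes g - tmax g" and xw: "hless x w" and w: "w \<notin> impl g"
  shows "\<exists>m \<in> tmax g. hless x m \<and> tle Hy m w"
proof -
  have to_max: "hless x m" if "m \<in> tmax g" "tless g x m" for m
    using hless_within_graft[OF g x graft_tmax_nonroot[OF g that(1)]] that(2) by blast
  have "w \<in> tnodes Hy" using hless_nodes[OF xw] by blast
  then show ?thesis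
  proof (rule hybr_node_cases)
    assume wS: "w \<in> S"
    let ?m = "rootin T w (tmax g)"
    have d: "w \<in> dcl T (tmax g)" "tless g x ?m" using hless_inner_supp[OF g x wS xw] by blast+
    have m: "?m \<in> tmax g" "tle T ?m w" using rootin_tmax[OF g d(1)] by blast+
    have "tle Hy ?m w"
      using tle_cases[OF m(2)] hless_SS[OF graft_tmax_supp[OF g m(1)] wS] hless_nodes[OF xw]
      unfolding tle_def by auto
    then show ?thesis using m(1) to_max[OF m(1) d(2)] by blast
  next
    fix E assume E: "E \<in> \<Gamma>" and wE: "w \<in> impl E"
    have Eg: "E \<noteq> g" using w wE by blast
    let ?m = "rootin T (troot E) (tmax g)"
    have d: "troot E \<in> dcl T (tmax g)" "tless g x ?m"
      using hless_inner_impl[OF g x E Eg wE xw] by blast+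
    have m: "?m \<in> tmax g" "tle T ?m (troot E)" using rootin_tmax[OF g d(1)] by blast+
    have "hless ?m w" using hless_SI[OF E graft_tmax_supp[OF g m(1)] wE] m(2) by blast
    then show ?thesis using m(1) to_max[OF m(1) d(2)] unfolding tle_def by blast
  qed
qed

lemma not_hless_tmax_graft:
  assumes g: "g \<in> \<Gamma>" and m: "m \<in> tmax g" and s: "s \<in> tnodes g - {troot g}"
  shows "\<not> hless m s"
  using s
proof (rule graft_nonroot_cases)
  assume "s \<in> impl g"
  then show ?thesis
    using hless_SI[OF g graft_tmax_supp[OF g m]] graft_tmax[OF g m]
      tle_tless_trans[of m "troot g" m] tless_irrefl by blast
next
  assume s_max: "s \<in> tmax g"
  show ?thesis
  proof
    assume "hless m s"
    then have "tless T m s"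
      using hless_SS[OF graft_tmax_supp[OF g m] graft_tmax_supp[OF g s_max]] by blast
    then show False using graft_tmax_eq[OF g m s_max] tless_imp_tle tless_irrefl by metis
  qed
qed

lemma hless_between_graft:
  assumes g: "g \<in> \<Gamma>" and x: "x \<in> tnodes g - tmax g" and s: "s \<in> tnodes g - {troot g}"
    and xw: "hless x w" and ws: "hless w s"
  shows "w \<in> impl g"
proof (rule ccontr)
  assume "w \<notin> impl g"
  then obtain m where m: "m \<in> tmax g" "tle Hy m w" using hless_leaving_graft[OF g x xw] by blast
  then have "hless m s" using ws hless_trans unfolding tle_def by blast
  then show False using not_hless_tmax_graft[OF g m(1) s] by blast
qed

lemma sons_hybr_subset_sons_graft:
  assumes g: "g \<in> \<Gamma>" and x: "x \<in> tnodes g - tmax g"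
  shows "sons Hy x \<subseteq> sons g x"
proof
  fix s assume s: "s \<in> sons Hy x"
  then have xs: "hless x s" and gap: "\<And>w. hless x w \<Longrightarrow> \<not> hless w s"
    unfolding sons_def by blast+
  have s_nonroot: "s \<in> tnodes g - {troot g}"
  proof (cases "s \<in> impl g")
    case False
    then obtain m where "m \<in> tmax g" "hless x m" "tle Hy m s"
      using hless_leaving_graft[OF g x xs] by blast
    then show ?thesis using gap graft_tmax_nonroot[OF g] unfolding tle_def by blast
  qed (use implD in blast)
  have "tless g x s" using hless_within_graft[OF g x s_nonroot] xs by blast
  moreover have "\<not> tless g w s" if xw: "tless g x w" for w
  proof
    assume ws: "tless g w s"
    have "hless x w" using hless_within_graft[OF g x graft_above_nonroot[OF g xw]] xw by blast
    moreover have "hless w s"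
      using hless_within_graft[OF g graft_below_inner[OF g ws] s_nonroot] ws by blast
    ultimately show False using gap by blast
  qed
  ultimately show "s \<in> sons g x" unfolding sons_def using s_nonroot by blast
qed

lemma sons_graft_subset_sons_hybr:
  assumes g: "g \<in> \<Gamma>" and x: "x \<in> tnodes g - tmax g"
  shows "sons g x \<subseteq> sons Hy x"
proof
  fix s assume s: "s \<in> sons g x"
  then have xs: "tless g x s" and gap: "\<And>w. tless g x w \<Longrightarrow> \<not> tless g w s"
    unfolding sons_def by blast+
  have s_nonroot: "s \<in> tnodes g - {troot g}" by (rule graft_above_nonroot[OF g xs])
  have "hless x s" using hless_within_graft[OF g x s_nonroot] xs by blast
  moreover have "\<not> hless w s" if xw: "hless x w" for w
  proof
    assume ws: "hless w s"
    have "w \<in> impl g" by (rule hless_between_graft[OF g x s_nonroot xw ws])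
    then have "tless g x w" "tless g w s"
      using hless_within_graft[OF g x] hless_within_graft[OF g _ s_nonroot] implD xw ws by blast+
    then show False using gap by blast
  qed
  ultimately show "s \<in> sons Hy x" unfolding sons_def using hless_nodes by blast
qed

lemma sons_hybr_graft: "g \<in> \<Gamma> \<Longrightarrow> x \<in> tnodes g - tmax g \<Longrightarrow> sons Hy x = sons g x"
  using sons_hybr_subset_sons_graft sons_graft_subset_sons_hybr by blast

lemma sons_supp_in_supp:
  assumes x: "x \<in> S" and nr: "x \<notin> troot ` \<Gamma>" and s: "s \<in> sons T x"
  shows "s \<in> S"
  unfolding supp_iff
proof (intro conjI ballI impI)
  have xs: "tless T x s" and gap: "\<And>z. tless T x z \<Longrightarrow> \<not> tless T z s" and sT: "s \<in> tnodes T"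
    using s unfolding sons_def by blast+
  show "s \<in> tnodes T" by (rule sT)
  fix E assume E: "E \<in> \<Gamma>" and Es: "tless T (troot E) s"
  from tless_linear_below[OF xs Es] show "s \<in> dcl T (tmax E)"
  proof (elim disjE)
    assume "x = troot E" then show ?thesis using nr E by blast
  next
    assume "tless T x (troot E)" then show ?thesis using gap Es by blast
  next
    assume Ex: "tless T (troot E) x"
    have xd: "x \<in> dcl T (tmax E)" by (rule supp_above_root_dcl[OF x E Ex])
    show ?thesis using rootin_upward[OF E xd tless_imp_tle[OF xs]] by blast
  qed
qed

lemma hless_supp_to_impl:
  assumes x: "x \<in> S" and nr: "x \<notin> troot ` \<Gamma>" and E: "E \<in> \<Gamma>" and w: "w \<in> impl E"
    and xw: "hless x w"
  shows "tless T x (troot E)"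
  using hless_SI[OF E x w] xw nr E tle_cases by blast

lemma sons_subset_sons_hybr:
  assumes x: "x \<in> S" and nr: "x \<notin> troot ` \<Gamma>"
  shows "sons T x \<subseteq> sons Hy x"
proof
  fix s assume s: "s \<in> sons T x"
  have xs: "tless T x s" and gap: "\<And>z. tless T x z \<Longrightarrow> \<not> tless T z s"
    using s unfolding sons_def by blast+
  have sS: "s \<in> S" by (rule sons_supp_in_supp[OF x nr s])
  have "\<not> (hless x w \<and> hless w s)" for w
  proof
    assume w: "hless x w \<and> hless w s"
    have "w \<in> tnodes Hy" using hless_nodes w by blast
    then show False
    proof (rule hybr_node_cases)
      assume wS: "w \<in> S"
      have "tless T x w" "tless T w s" using hless_SS[OF x wS] hless_SS[OF wS sS] w by blast+
      then show False using gap by blast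
    next
      fix E assume E: "E \<in> \<Gamma>" and wE: "w \<in> impl E"
      have "tless T x (troot E)" using hless_supp_to_impl[OF x nr E wE] w by blast
      moreover have "tless T (troot E) s"
        using hless_IS[OF E wE sS] w dcl_tmax_above_root[OF E] by blast
      ultimately show False using gap by blast
    qed
  qed
  then show "s \<in> sons Hy x" unfolding sons_def using hless_SS[OF x sS] xs hless_nodes by blast
qed

lemma hless_interpolate_tless:
  assumes x: "x \<in> S" and nr: "x \<notin> troot ` \<Gamma>" and s: "s \<in> S"
    and xw: "tless T x w" and ws: "tless T w s"
  shows "\<exists>z. hless x z \<and> hless z s"
proof (cases "w \<in> S")
  case True
  then show ?thesis using hless_SS[OF x True] hless_SS[OF True s] xw ws by blast
next
  case False
  then obtain E where E: "E \<in> \<Gamma>" and Ew: "tless T (troot E) w" and nd: "w \<notin> dcl T (tmax E)"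
    using tless_nodes[OF ws] unfolding supp_iff by blast
  from tless_linear_below[OF xw Ew] show ?thesis
  proof (elim disjE)
    assume "x = troot E" then show ?thesis using nr E by blast
  next
    assume "tless T (troot E) x"
    then have "x \<in> dcl T (tmax E)" by (rule supp_above_root_dcl[OF x E])
    then show ?thesis using rootin_upward[OF E _ tless_imp_tle[OF xw]] nd by blast
  next
    assume "tless T x (troot E)"
    then show ?thesis
      using hless_SS[OF x graft_root_supp[OF E]] hless_SS[OF graft_root_supp[OF E] s]
        tless_trans[OF Ew ws] by blast
  qed
qed

lemma sons_hybr_subset_sons:
  assumes x: "x \<in> S" and nr: "x \<notin> troot ` \<Gamma>"
  shows "sons Hy x \<subseteq> sons T x"
proof
  fix s assume s: "s \<in> sons Hy x"
  have xs: "hless x s" and gap: "\<And>z. hless x z \<Longrightarrow> \<not> hless z s" and sH: "s \<in> tnodes Hy"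
    using s unfolding sons_def by blast+
  have sS: "s \<in> S"
  proof (rule hybr_node_cases[OF sH])
    fix E assume E: "E \<in> \<Gamma>" and sE: "s \<in> impl E"
    have "hless x (troot E)"
      using hless_SS[OF x graft_root_supp[OF E]] hless_supp_to_impl[OF x nr E sE xs] by blast
    moreover have "hless (troot E) s"
      using hless_SI[OF E graft_root_supp[OF E] sE] tle_refl[OF graft_root_node[OF E]] by blast
    ultimately show ?thesis using gap by blast
  qed
  have "\<not> tless T w s" if "tless T x w" for w
    using hless_interpolate_tless[OF x nr sS that] gap by blast
  then show "s \<in> sons T x" unfolding sons_def using hless_SS[OF x sS] xs tless_nodes by blast
qed

lemma sons_hybr_supp: "x \<in> S \<Longrightarrow> x \<notin> troot ` \<Gamma> \<Longrightarrow> sons Hy x = sons T x"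
  using sons_subset_sons_hybr sons_hybr_subset_sons by blast

lemma supp_nonmax_in_hybr:
  assumes x: "x \<in> S" and nr: "x \<notin> troot ` \<Gamma>" and nm: "x \<notin> tmax Hy"
  shows "x \<notin> tmax T"
proof -
  have "x \<in> tnodes Hy" using hybr_nodes x by blast
  then obtain y where y: "hless x y" using nm unfolding tmax_def by blast
  have "y \<in> tnodes Hy" using hless_nodes[OF y] by blast
  then have "\<exists>z. tless T x z"
  proof (rule hybr_node_cases)
    assume "y \<in> S" then show ?thesis using hless_SS[OF x] y by blast
  next
    fix E assume "E \<in> \<Gamma>" "y \<in> impl E"
    then show ?thesis using hless_supp_to_impl[OF x nr] y by blast
  qed
  then show ?thesis unfolding tmax_def by blast
qed

lemma branch_hybr_downward_closed:
  assumes B: "is_branch Hy B" and c: "c \<in> B" and ac: "hless a c"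
  shows "a \<in> B"
proof (rule is_branch_insert[OF B])
  show "a \<in> tnodes Hy" using hless_nodes[OF ac] by blast
  fix b assume b: "b \<in> B"
  from is_branch_comparable[OF B b c] show "a = b \<or> hless a b \<or> hless b a"
    using ac hless_linear_below[OF ac] hless_trans[OF ac] by blast
qed

lemma is_chain_branch_graft:
  assumes B: "is_branch Hy B" and g: "g \<in> \<Gamma>"
  shows "is_chain g (insert (troot g) (B \<inter> impl g))"
  unfolding is_chain_def
proof (intro conjI ballI)
  interpret g: tree g by (rule graft_tree[OF g])
  show "insert (troot g) (B \<inter> impl g) \<subseteq> tnodes g" using graft_root[OF g] implD by blast
  fix a b assume a: "a \<in> insert (troot g) (B \<inter> impl g)" and b: "b \<in> insert (troot g) (B \<inter> impl g)"
  have "tle g a b \<or> tle g b a" if "a \<in> B \<inter> impl g" "b \<in> B \<inter> impl g"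
  proof -
    have "a = b \<or> tless g a b \<or> tless g b a"
      using is_branch_comparable[OF B] hless_II[OF g] that by blast
    then show ?thesis using that implD g.tle_refl g.tless_imp_tle by blast
  qed
  then show "tle g a b \<or> tle g b a" using a b graft_root[OF g] implD by blast
qed

text \<open>Above the root, the branch stays in the implant until it meets a maximal node; a maximal node
  above a bound of that part of the branch is comparable with all of it, hence on it.\<close>

lemma branch_graft_root_meets_tmax:
  assumes bc: "\<forall>g\<in>\<Gamma>. bounded_chains g" and B: "is_branch Hy B" and g: "g \<in> \<Gamma>"
    and r: "troot g \<in> B"
  shows "\<exists>m \<in> B. m \<in> tmax g"
proof (rule ccontr)
  assume no_max: "\<not> (\<exists>m \<in> B. m \<in> tmax g)"
  interpret g: tree g by (rule graft_tree[OF g])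
  have r_inner: "troot g \<in> tnodes g - tmax g"
    using graft_root[OF g] graft_root_notin_tmax[OF g] by blast
  have above_root: "w \<in> impl g" if w: "w \<in> B" "hless (troot g) w" for w
  proof (rule ccontr)
    assume "w \<notin> impl g"
    then obtain m where "m \<in> tmax g" "tle Hy m w"
      using hless_leaving_graft[OF g r_inner w(2)] by blast
    then show False
      using no_max w(1) branch_hybr_downward_closed[OF B w(1)] unfolding tle_def by blast
  qed
  let ?C = "insert (troot g) (B \<inter> impl g)"
  obtain u where u: "\<forall>c \<in> ?C. tle g c u" "u \<in> tnodes g"
    using bc g is_chain_branch_graft[OF B g] unfolding bounded_chains_def by blast
  obtain m where m: "m \<in> tmax g" "tle g u m"
    using g.bounded_chains_tmax_above[OF _ u(2)] bc g by blast
  have m_nonroot: "m \<in> tnodes g - {troot g}" by (rule graft_tmax_nonroot[OF g m(1)])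
  have below_m: "hless w m" if w: "w \<in> ?C" for w
  proof -
    have "tle g w m" using u(1) w m(2) g.tle_trans by blast
    moreover have "w \<noteq> m" using w m(1) implD graft_root_notin_tmax[OF g] by blast
    moreover have "w \<in> tnodes g - tmax g" using w r_inner implD by blast
    ultimately show ?thesis using hless_within_graft[OF g _ m_nonroot] g.tle_cases by blast
  qed
  have "m \<in> B"
  proof (rule is_branch_insert[OF B])
    show "m \<in> tnodes Hy" using hybr_nodes graft_tmax_supp[OF g m(1)] by blast
    fix w assume w: "w \<in> B"
    from is_branch_comparable[OF B w r] show "m = w \<or> hless m w \<or> hless w m"
    proof (elim disjE)
      assume "hless w (troot g)"
      then show ?thesis using below_m[of "troot g"] hless_trans by blast
    qed (use below_m above_root w in blast)+
  qed
  then show False using no_max m(1) by blast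
qed

lemma branch_impl_below_tmax:
  assumes bc: "\<forall>g\<in>\<Gamma>. bounded_chains g" and B: "is_branch Hy B" and g: "g \<in> \<Gamma>"
    and x: "x \<in> B" "x \<in> impl g"
  shows "\<exists>m \<in> B. m \<in> tmax g \<and> tless g x m"
proof -
  have "hless (troot g) x"
    using hless_SI[OF g graft_root_supp[OF g] x(2)] tle_refl[OF graft_root_node[OF g]] by blast
  then have "troot g \<in> B" by (rule branch_hybr_downward_closed[OF B x(1)])
  then obtain m where m: "m \<in> B" "m \<in> tmax g" using branch_graft_root_meets_tmax[OF bc B g] by blast
  have x_inner: "x \<in> tnodes g - tmax g" using implD[OF x(2)] by blast
  have m_nonroot: "m \<in> tnodes g - {troot g}" by (rule graft_tmax_nonroot[OF g m(2)])
  have "x \<noteq> m" using x(2) m(2) implD by blast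
  moreover have "\<not> hless m x" using not_hless_tmax_graft[OF g m(2)] x_inner implD[OF x(2)] by blast
  ultimately have "hless x m" using is_branch_comparable[OF B x(1) m(1)] by blast
  then show ?thesis using hless_within_graft[OF g x_inner m_nonroot] m by blast
qed

definition trace :: "'n set \<Rightarrow> 'n set" where
  "trace B = {t \<in> tnodes T. \<exists>b \<in> B \<inter> S. tle T t b}"

lemma trace_supp: "b \<in> B \<Longrightarrow> b \<in> S \<Longrightarrow> b \<in> trace B"
  unfolding trace_def using tle_refl supp_nodes by blast

lemma is_chain_trace:
  assumes B: "is_branch Hy B"
  shows "is_chain T (trace B)"
  unfolding is_chain_def
proof (intro conjI ballI)
  show "trace B \<subseteq> tnodes T" unfolding trace_def by blast
  fix t1 t2 assume "t1 \<in> trace B" "t2 \<in> trace B"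
  then obtain b1 b2 where b: "b1 \<in> B" "b1 \<in> S" "tle T t1 b1" "b2 \<in> B" "b2 \<in> S" "tle T t2 b2"
    unfolding trace_def by blast
  have "tle T b1 b2 \<or> tle T b2 b1"
    using is_branch_comparable[OF B b(1) b(4)] hless_SS b tle_refl supp_nodes tless_imp_tle by metis
  then show "tle T t1 t2 \<or> tle T t2 t1"
    using b(3,6) tle_trans tle_linear_below by metis
qed

text \<open>Implant nodes on the branch lie below maximal nodes of their graft, which are support nodes.\<close>

lemma branch_insert_supp_above:
  assumes bc: "\<forall>g\<in>\<Gamma>. bounded_chains g" and B: "is_branch Hy B" and v: "v \<in> S"
    and above: "\<And>b. b \<in> B \<Longrightarrow> b \<in> S \<Longrightarrow> tless T b v"
  shows "v \<in> B"
proof (rule is_branch_insert[OF B])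
  show "v \<in> tnodes Hy" using v hybr_nodes by blast
  fix w assume w: "w \<in> B"
  have "hless w v"
  proof (rule hybr_node_cases[OF is_branch_nodes[OF B w]])
    assume "w \<in> S" then show ?thesis using hless_SS[OF _ v] above w by blast
  next
    fix E assume E: "E \<in> \<Gamma>" and wE: "w \<in> impl E"
    obtain m where m: "m \<in> B" "m \<in> tmax E" "tless E w m"
      using branch_impl_below_tmax[OF bc B E w wE] by blast
    have mv: "tle T m v" using above[OF m(1) graft_tmax_supp[OF E m(2)]] tless_imp_tle by blast
    show ?thesis
      using hless_IS[OF E wE v] dclI[OF m(2) mv] rootin_eq[OF E m(2) mv] m(3) by simp
  qed
  then show "v = w \<or> hless v w \<or> hless w v" by blast
qed

lemma node_above_branch_in_supp:
  assumes bc: "\<forall>g\<in>\<Gamma>. bounded_chains g" and B: "is_branch Hy B" and t: "t \<in> tnodes T"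
    and above: "\<And>b. b \<in> B \<Longrightarrow> b \<in> S \<Longrightarrow> tless T b t"
  shows "t \<in> S"
proof (rule ccontr)
  assume "t \<notin> S"
  then obtain E where E: "E \<in> \<Gamma>" and Et: "tless T (troot E) t" and t_nd: "t \<notin> dcl T (tmax E)"
    using t unfolding supp_iff by blast
  have in_dcl: "t \<in> dcl T (tmax E)" if b: "b \<in> B" "b \<in> S" "tle T (troot E) b" for b
  proof (cases "troot E = b")
    case True
    then obtain m where "m \<in> B" "m \<in> tmax E"
      using branch_graft_root_meets_tmax[OF bc B E] b(1) by blast
    then show ?thesis using above graft_tmax_supp[OF E] dclI tless_imp_tle by blast
  next
    case False
    then have "b \<in> dcl T (tmax E)" using supp_above_root_dcl[OF b(2) E] b(3) tle_cases by blast
    then show ?thesis using rootin_upward[OF E _ tless_imp_tle[OF above[OF b(1,2)]]] by blast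
  qed
  have "troot E \<in> B"
  proof (cases "troot E \<in> B")
    case False
    have "tless T b (troot E)" if "b \<in> B" "b \<in> S" for b
      using tless_linear_below[OF above[OF that] Et] in_dcl[OF that] t_nd False that(1)
        tless_imp_tle by blast
    then show ?thesis using branch_insert_supp_above[OF bc B graft_root_supp[OF E]] by blast
  qed
  then show False
    using in_dcl[OF _ graft_root_supp[OF E] tle_refl[OF graft_root_node[OF E]]] t_nd by blast
qed

lemma trace_maximal:
  assumes bc: "\<forall>g\<in>\<Gamma>. bounded_chains g" and B: "is_branch Hy B"
    and C: "is_chain T C" "trace B \<subseteq> C" and t: "t \<in> C"
  shows "t \<in> trace B"
proof (rule ccontr)
  assume t_notin: "t \<notin> trace B"
  have tT: "t \<in> tnodes T" using C t unfolding is_chain_def by blast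
  have above: "tless T b t" if b: "b \<in> B" "b \<in> S" for b
  proof -
    have "b \<in> C" using trace_supp[OF b] C by blast
    then have "tle T t b \<or> tle T b t" using C t unfolding is_chain_def by blast
    moreover have "\<not> tle T t b" using t_notin b tT unfolding trace_def by blast
    ultimately show ?thesis using tle_cases by blast
  qed
  have "t \<in> S" by (rule node_above_branch_in_supp[OF bc B tT above])
  then show False using branch_insert_supp_above[OF bc B _ above] t_notin trace_supp by blast
qed

lemma is_branch_trace:
  assumes bc: "\<forall>g\<in>\<Gamma>. bounded_chains g" and B: "is_branch Hy B"
  shows "is_branch T (trace B)"
  unfolding is_branch_def using is_chain_trace[OF B] trace_maximal[OF bc B] by blast

lemma trace_graft_root_meets_tmax:
  assumes bc: "\<forall>g\<in>\<Gamma>. bounded_chains g" and B: "is_branch Hy B" and g: "g \<in> \<Gamma>"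
    and r: "troot g \<in> trace B"
  shows "\<exists>m \<in> trace B. m \<in> tmax g"
proof -
  obtain b where b: "b \<in> B" "b \<in> S" "tle T (troot g) b" using r unfolding trace_def by blast
  show ?thesis
  proof (cases "troot g = b")
    case True
    then obtain m where "m \<in> B" "m \<in> tmax g"
      using branch_graft_root_meets_tmax[OF bc B g] b(1) by blast
    then show ?thesis using trace_supp graft_tmax_supp[OF g] by blast
  next
    case False
    then have "b \<in> dcl T (tmax g)" using supp_above_root_dcl[OF b(2) g] b(3) tle_cases by blast
    then have "rootin T b (tmax g) \<in> tmax g" "tle T (rootin T b (tmax g)) b"
      using rootin_tmax[OF g] by blast+
    then show ?thesis unfolding trace_def using b tle_nodes by blast
  qed
qed

lemma hybr_nonempty: "tnodes T \<noteq> {} \<Longrightarrow> tnodes Hy \<noteq> {}"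
  using supp_iff graft_root_supp hybr_nodes by blast

end

section \<open>Foliage trees\<close>

lemma splittable_branch_contains:
  assumes split: "splittable F" and P: "is_branch (skel F) P" and p: "p \<in> fruit F P"
    and e: "e \<in> tnodes (skel F)" "p \<in> leaf F e"
  shows "e \<in> P"
proof -
  have "is_chain (skel F) (insert e P)"
    unfolding is_chain_def
  proof (intro conjI ballI)
    show "insert e P \<subseteq> tnodes (skel F)" using e P unfolding is_branch_def is_chain_def by blast
    fix a b assume a: "a \<in> insert e P" and b: "b \<in> insert e P"
    have "a \<in> tnodes (skel F)" "b \<in> tnodes (skel F)"
      using a b e is_branch_nodes[OF P] by blast+
    moreover have "p \<in> leaf F a" "p \<in> leaf F b" using a b p e unfolding fruit_def by blast+
    then have "\<not> incomp (skel F) a b" using split unfolding splittable_def by blast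
    ultimately show "tle (skel F) a b \<or> tle (skel F) b a" unfolding incomp_def by blast
  qed
  then show ?thesis using P unfolding is_branch_def by blast
qed

definition locally_strict_at :: "('n, 'a) ftree \<Rightarrow> 'n \<Rightarrow> bool" where
  "locally_strict_at F x \<longleftrightarrow>
     leaf F x = (\<Union>s \<in> sons (skel F) x. leaf F s) \<and>
     (\<forall>s \<in> sons (skel F) x. \<forall>t \<in> sons (skel F) x. s \<noteq> t \<longrightarrow> leaf F s \<inter> leaf F t = {})"

lemma locally_strict_iff:
  "locally_strict F \<longleftrightarrow> (\<forall>x \<in> tnodes (skel F) - tmax (skel F). locally_strict_at F x)"
  unfolding locally_strict_def locally_strict_at_def by blast

lemma locally_strict_at_diff:
  assumes K: "locally_strict_at K x" and sons: "sons (skel H) x = sons (skel K) x"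
    and leaf_x: "leaf H x = leaf K x - L"
    and leaf_sons: "\<And>s. s \<in> sons (skel K) x \<Longrightarrow> leaf H s = leaf K s - L"
  shows "locally_strict_at H x"
proof -
  have union: "leaf K x = (\<Union>s \<in> sons (skel K) x. leaf K s)"
    and disjoint: "\<And>s t. s \<in> sons (skel K) x \<Longrightarrow> t \<in> sons (skel K) x \<Longrightarrow> s \<noteq> t \<Longrightarrow>
      leaf K s \<inter> leaf K t = {}"
    using K unfolding locally_strict_at_def by blast+
  have "(\<Union>s \<in> sons (skel H) x. leaf H s) = (\<Union>s \<in> sons (skel K) x. leaf K s) - L"
    using sons leaf_sons by auto
  moreover have "leaf H s \<inter> leaf H t = {}"
    if "s \<in> sons (skel H) x" "t \<in> sons (skel H) x" "s \<noteq> t" for s t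
    using that disjoint[of s t] leaf_sons[of s] leaf_sons[of t] sons by auto
  ultimately show ?thesis unfolding locally_strict_at_def using union leaf_x by auto
qed

locale foliage_hybrid =
  fixes F :: "('n, 'a) ftree" and \<phi> :: "('n, 'a) ftree set"
  assumes foliage_tree: "foliage_tree F" and nonincreasing: "nonincreasing F"
    and consistent_fgrafts: "consistent_fgrafts F \<phi>"
begin

abbreviation "T \<equiv> skel F"
abbreviation "\<Gamma> \<equiv> skel ` \<phi>"
abbreviation "L \<equiv> loss F \<phi>"
abbreviation "H \<equiv> fhybr F \<phi>"

sublocale graft_family "skel F" "skel ` \<phi>"
  using foliage_tree consistent_fgrafts
  by unfold_locales (auto simp: foliage_tree_def consistent_fgrafts_def intro: tree.intro)

lemma skel_graft: "G \<in> \<phi> \<Longrightarrow> skel G \<in> \<Gamma>"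
  by blast

lemma foliage_graft: "G \<in> \<phi> \<Longrightarrow> foliage_graft F G"
  using consistent_fgrafts unfolding consistent_fgrafts_def by blast

lemma skel_inj: "G \<in> \<phi> \<Longrightarrow> G' \<in> \<phi> \<Longrightarrow> skel G = skel G' \<Longrightarrow> G = G'"
  using consistent_fgrafts unfolding consistent_fgrafts_def inj_on_def by blast

lemma graft_leaf_antimono: "G \<in> \<phi> \<Longrightarrow> tle (skel G) x y \<Longrightarrow> leaf G y \<subseteq> leaf G x"
  using foliage_graft unfolding foliage_graft_def nonincreasing_def by blast

lemma graft_leaf_root: "G \<in> \<phi> \<Longrightarrow> leaf G (troot (skel G)) \<subseteq> leaf F (troot (skel G))"
  using foliage_graft unfolding foliage_graft_def by blast

lemma graft_leaf_tmax: "G \<in> \<phi> \<Longrightarrow> m \<in> tmax (skel G) \<Longrightarrow> leaf G m = leaf F m"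
  using foliage_graft unfolding foliage_graft_def by blast

lemma leaf_antimono: "tle (skel F) x y \<Longrightarrow> leaf F y \<subseteq> leaf F x"
  using nonincreasing unfolding nonincreasing_def by blast

lemma graft_leaf_subset_root:
  "G \<in> \<phi> \<Longrightarrow> x \<in> tnodes (skel G) \<Longrightarrow> leaf G x \<subseteq> leaf F (troot (skel G))"
proof -
  assume G: "G \<in> \<phi>" and x: "x \<in> tnodes (skel G)"
  then have "tle (skel G) (troot (skel G)) x" using graft_root[of "skel G"] by blast
  then show ?thesis using graft_leaf_antimono[OF G] graft_leaf_root[OF G] by blast
qed

lemma graft_leaf_above_tmax:
  assumes G: "G \<in> \<phi>" and m: "m \<in> tmax (skel G)" "tless (skel G) x m" and y: "tle (skel F) m y"
  shows "leaf F y \<subseteq> leaf G x"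
proof -
  have "leaf F y \<subseteq> leaf F m" by (rule leaf_antimono[OF y])
  also have "\<dots> = leaf G m" by (rule graft_leaf_tmax[OF G m(1), symmetric])
  also have "\<dots> \<subseteq> leaf G x"
    by (rule graft_leaf_antimono[OF G tree.tless_imp_tle[OF graft_tree m(2)]]) (use G in blast)
  finally show ?thesis .
qed

lemma skel_fhybr: "skel H = Hy"
  unfolding fhybr_def by simp

lemma leaf_fhybr_supp: "x \<in> S \<Longrightarrow> leaf H x = leaf F x - L"
  unfolding fhybr_def fsupp_def by simp

lemma leaf_fhybr_impl:
  assumes G: "G \<in> \<phi>" and x: "x \<in> impl (skel G)"
  shows "leaf H x = leaf G x - L"
proof -
  have "(SOME G'. G' \<in> \<phi> \<and> x \<in> impl (skel G')) = G"
  proof (rule some_equality)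
    show "G \<in> \<phi> \<and> x \<in> impl (skel G)" using G x by blast
    fix G' assume "G' \<in> \<phi> \<and> x \<in> impl (skel G')"
    then show "G' = G" using impl_unique[of "skel G'" "skel G"] G x skel_inj by blast
  qed
  then show ?thesis using impl_notin_supp[of "skel G"] G x unfolding fhybr_def fsupp_def by simp
qed

text \<open>At the root and the maximal nodes of a graft the hybrid leaf is defined from \<open>F\<close>; at the root
  the two agree because the cut is part of the loss.\<close>

lemma leaf_fhybr_graft:
  assumes G: "G \<in> \<phi>" and x: "x \<in> tnodes (skel G)"
  shows "leaf H x = leaf G x - L"
proof -
  have g: "skel G \<in> skel ` \<phi>" using G by blast
  from graft_node_cases[OF x] show ?thesis
  proof (elim disjE)
    assume x_root: "x = troot (skel G)"
    have "leaf F (troot (skel G)) - L = leaf G (troot (skel G)) - L"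
      using graft_leaf_root[OF G] G unfolding loss_def cut_def by blast
    then show ?thesis using leaf_fhybr_supp[OF graft_root_supp[OF g]] x_root by simp
  next
    assume "x \<in> impl (skel G)" then show ?thesis by (rule leaf_fhybr_impl[OF G])
  next
    assume "x \<in> tmax (skel G)"
    then show ?thesis using leaf_fhybr_supp[OF graft_tmax_supp[OF g]] graft_leaf_tmax[OF G] by simp
  qed
qed

lemma fhybr_node_cases:
  "x \<in> tnodes Hy \<Longrightarrow> (x \<in> S \<Longrightarrow> P) \<Longrightarrow> (\<And>G. G \<in> \<phi> \<Longrightarrow> x \<in> impl (skel G) \<Longrightarrow> P) \<Longrightarrow> P"
  using hybr_nodes by blast

lemma leaf_fhybr_antimono:
  assumes xy: "hless x y"
  shows "leaf H y \<subseteq> leaf H x"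
proof -
  have n: "x \<in> tnodes Hy" "y \<in> tnodes Hy" using hless_nodes[OF xy] by blast+
  show ?thesis
  proof (rule fhybr_node_cases[OF n(1)]; rule fhybr_node_cases[OF n(2)])
    assume x: "x \<in> S" and y: "y \<in> S"
    then have "leaf F y \<subseteq> leaf F x" using hless_SS xy leaf_antimono tless_imp_tle by blast
    then show ?thesis using leaf_fhybr_supp x y by blast
  next
    fix E assume x: "x \<in> S" and E: "E \<in> \<phi>" "y \<in> impl (skel E)"
    have "tle T x (troot (skel E))" using hless_SI[OF skel_graft[OF E(1)] x E(2)] xy by blast
    then have "leaf F (troot (skel E)) \<subseteq> leaf F x" by (rule leaf_antimono)
    moreover have "leaf E y \<subseteq> leaf F (troot (skel E))"
      by (rule graft_leaf_subset_root[OF E(1) impl_nodes[OF E(2)]])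
    ultimately show ?thesis using leaf_fhybr_supp[OF x] leaf_fhybr_impl[OF E] by blast
  next
    fix D assume y: "y \<in> S" and D: "D \<in> \<phi>" "x \<in> impl (skel D)"
    have d: "y \<in> dcl T (tmax (skel D))" "tless (skel D) x (rootin T y (tmax (skel D)))"
      using hless_IS[OF skel_graft[OF D(1)] D(2) y] xy by blast+
    have "leaf F y \<subseteq> leaf D x"
      using graft_leaf_above_tmax[OF D(1) _ d(2)] rootin_tmax[OF skel_graft[OF D(1)] d(1)] by blast
    then show ?thesis using leaf_fhybr_supp[OF y] leaf_fhybr_impl[OF D] by blast
  next
    fix D E assume D: "D \<in> \<phi>" "x \<in> impl (skel D)" and E: "E \<in> \<phi>" "y \<in> impl (skel E)"
    have "leaf E y \<subseteq> leaf D x"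
    proof (cases "skel D = skel E")
      case True
      then have "D = E" by (rule skel_inj[OF D(1) E(1)])
      then have "tless (skel D) x y" using hless_II[OF skel_graft[OF D(1)] D(2)] E(2) xy by blast
      then show ?thesis
        using graft_leaf_antimono[OF D(1) tree.tless_imp_tle[OF graft_tree]] D(1) \<open>D = E\<close> by blast
    next
      case False
      let ?r = "troot (skel E)"
      have d: "?r \<in> dcl T (tmax (skel D))" "tless (skel D) x (rootin T ?r (tmax (skel D)))"
        using hless_II_distinct[OF skel_graft[OF D(1)] skel_graft[OF E(1)] False D(2) E(2)] xy
        by blast+
      have "leaf F ?r \<subseteq> leaf D x"
        using graft_leaf_above_tmax[OF D(1) _ d(2)] rootin_tmax[OF skel_graft[OF D(1)] d(1)]
          by blast
      then show ?thesis using graft_leaf_subset_root[OF E(1) impl_nodes[OF E(2)]] by blast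
    qed
    then show ?thesis using leaf_fhybr_impl[OF D] leaf_fhybr_impl[OF E] by blast
  qed
qed

lemma fhybr_nonincreasing: "nonincreasing H"
  unfolding nonincreasing_def skel_fhybr tle_def using leaf_fhybr_antimono by blast

lemma fhybr_open_in:
  assumes F_open: "open_in X F" and G_open: "\<forall>G \<in> \<phi>. open_in X G"
  shows "open_in (subtopology X (topspace X - L)) H"
  unfolding open_in_def skel_fhybr
proof
  have open_diff: "openin (subtopology X (topspace X - L)) (A - L)" if "openin X A" for A
  proof -
    have "A - L = A \<inter> (topspace X - L)" using openin_subset[OF that] by blast
    then show ?thesis unfolding openin_subtopology using that by blast
  qed
  fix x assume "x \<in> tnodes Hy"
  then show "openin (subtopology X (topspace X - L)) (leaf H x)"
  proof (rule fhybr_node_cases)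
    assume x: "x \<in> S"
    then have "openin X (leaf F x)" using F_open supp_nodes unfolding open_in_def by blast
    then show ?thesis using open_diff leaf_fhybr_supp[OF x] by simp
  next
    fix G assume G: "G \<in> \<phi>" "x \<in> impl (skel G)"
    then have "openin X (leaf G x)" using G_open impl_nodes unfolding open_in_def by blast
    then show ?thesis using open_diff leaf_fhybr_impl[OF G] by simp
  qed
qed

lemma leaf_disjoint_supp_impl:
  assumes F_split: "splittable F" and E: "E \<in> \<phi>" "y \<in> impl (skel E)" and E_split: "splittable E"
    and x: "x \<in> S" and nxy: "\<not> hless x y" and nyx: "\<not> hless y x"
  shows "leaf F x \<inter> leaf E y = {}"
proof -
  let ?g = "skel E" and ?e = "troot (skel E)"
  have g: "?g \<in> \<Gamma>" using E by blast
  have nxe: "\<not> tle T x ?e" using hless_SI[OF g x E(2)] nxy by blast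
  show ?thesis
  proof (cases "tle T ?e x")
    case True
    let ?m = "rootin T x (tmax ?g)"
    have "x \<in> dcl T (tmax ?g)" using supp_above_root_dcl[OF x g] True nxe tle_cases by blast
    then have m: "?m \<in> tmax ?g" "tle T ?m x" "\<not> tless ?g y ?m"
      using rootin_tmax[OF g] hless_IS[OF g E(2) x] nyx by blast+
    have "incomp ?g y ?m" by (rule impl_incomp_tmax[OF E(2) m(1,3)])
    then have "leaf E y \<inter> leaf E ?m = {}" using E_split unfolding splittable_def by blast
    then show ?thesis using leaf_antimono[OF m(2)] graft_leaf_tmax[OF E(1) m(1)] by blast
  next
    case False
    then have "incomp T x ?e"
      using nxe supp_nodes[OF x] graft_root_node[OF g] unfolding incomp_def by blast
    then have "leaf F x \<inter> leaf F ?e = {}" using F_split unfolding splittable_def by blast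
    then show ?thesis using graft_leaf_subset_root[OF E(1) impl_nodes[OF E(2)]] by blast
  qed
qed

lemma leaf_disjoint_impl_graft_above:
  assumes D: "D \<in> \<phi>" "x \<in> impl (skel D)" and E: "E \<in> \<phi>" "y \<in> impl (skel E)"
    and DE: "skel D \<noteq> skel E" and D_split: "splittable D"
    and above: "troot (skel E) \<in> dcl T (tmax (skel D))" and nxy: "\<not> hless x y"
  shows "leaf D x \<inter> leaf E y = {}"
proof -
  have g: "skel D \<in> \<Gamma>" "skel E \<in> \<Gamma>" using D E by blast+
  let ?m = "rootin T (troot (skel E)) (tmax (skel D))"
  have m: "?m \<in> tmax (skel D)" "tle T ?m (troot (skel E))"
    using rootin_tmax[OF g(1) above] by blast+
  have "\<not> tless (skel D) x ?m" using hless_II_distinct[OF g DE D(2) E(2)] nxy above by blast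
  then have "incomp (skel D) x ?m" by (rule impl_incomp_tmax[OF D(2) m(1)])
  then have "leaf D x \<inter> leaf D ?m = {}" using D_split unfolding splittable_def by blast
  then show ?thesis
    using graft_leaf_subset_root[OF E(1) impl_nodes[OF E(2)]] leaf_antimono[OF m(2)]
      graft_leaf_tmax[OF D(1) m(1)] by blast
qed

lemma leaf_disjoint_impl_impl:
  assumes F_split: "splittable F" and G_split: "\<forall>G \<in> \<phi>. splittable G"
    and D: "D \<in> \<phi>" "x \<in> impl (skel D)" and E: "E \<in> \<phi>" "y \<in> impl (skel E)"
    and xy: "x \<noteq> y" and nxy: "\<not> hless x y" and nyx: "\<not> hless y x"
  shows "leaf D x \<inter> leaf E y = {}"
proof (cases "skel D = skel E")
  case True
  then have "D = E" by (rule skel_inj[OF D(1) E(1)])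
  have "\<not> tless (skel D) x y" "\<not> tless (skel D) y x"
    using hless_II[OF skel_graft[OF D(1)]] D(2) E(2) nxy nyx \<open>D = E\<close> by blast+
  then have "incomp (skel D) x y"
    using xy impl_nodes D(2) E(2) \<open>D = E\<close> unfolding incomp_def tle_def by blast
  then show ?thesis using G_split D(1) \<open>D = E\<close> unfolding splittable_def by blast
next
  case False
  have g: "skel D \<in> \<Gamma>" "skel E \<in> \<Gamma>" using D E by blast+
  from consistent_pair[OF g False] show ?thesis
  proof (elim conjE disjE)
    assume "incomp T (troot (skel D)) (troot (skel E))"
    then have "leaf F (troot (skel D)) \<inter> leaf F (troot (skel E)) = {}"
      using F_split unfolding splittable_def by blast
    then show ?thesis
      using graft_leaf_subset_root[OF D(1) impl_nodes[OF D(2)]]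
        graft_leaf_subset_root[OF E(1) impl_nodes[OF E(2)]] by blast
  next
    assume "troot (skel D) \<in> dcl T (tmax (skel E))"
    from leaf_disjoint_impl_graft_above[OF E D False[symmetric] _ this nyx] show ?thesis
      using G_split E(1) by (simp add: Int_commute)
  next
    assume "troot (skel E) \<in> dcl T (tmax (skel D))"
    from leaf_disjoint_impl_graft_above[OF D E False _ this nxy] show ?thesis
      using G_split D(1) by blast
  qed
qed

lemma fhybr_splittable:
  assumes F_split: "splittable F" and G_split: "\<forall>G \<in> \<phi>. splittable G"
  shows "splittable H"
  unfolding splittable_def skel_fhybr
proof (intro allI impI)
  fix x y assume inc: "incomp Hy x y"
  have n: "x \<in> tnodes Hy" "y \<in> tnodes Hy" and nxy: "\<not> hless x y" and nyx: "\<not> hless y x"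
    and xy: "x \<noteq> y"
    using inc unfolding incomp_def tle_def by blast+
  show "leaf H x \<inter> leaf H y = {}"
  proof (rule fhybr_node_cases[OF n(1)]; rule fhybr_node_cases[OF n(2)])
    assume x: "x \<in> S" and y: "y \<in> S"
    have "incomp T x y"
      using supp_nodes[OF x] supp_nodes[OF y] xy nxy nyx hless_SS[OF x y] hless_SS[OF y x]
      unfolding incomp_def tle_def by blast
    then show ?thesis
      using F_split leaf_fhybr_supp[OF x] leaf_fhybr_supp[OF y] unfolding splittable_def by blast
  next
    fix E assume x: "x \<in> S" and E: "E \<in> \<phi>" "y \<in> impl (skel E)"
    show ?thesis
      using leaf_disjoint_supp_impl[OF F_split E _ x nxy nyx] G_split E(1)
        leaf_fhybr_supp[OF x] leaf_fhybr_impl[OF E] by blast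
  next
    fix E assume y: "y \<in> S" and E: "E \<in> \<phi>" "x \<in> impl (skel E)"
    show ?thesis
      using leaf_disjoint_supp_impl[OF F_split E _ y nyx nxy] G_split E(1)
        leaf_fhybr_supp[OF y] leaf_fhybr_impl[OF E] by blast
  next
    fix D E assume D: "D \<in> \<phi>" "x \<in> impl (skel D)" and E: "E \<in> \<phi>" "y \<in> impl (skel E)"
    show ?thesis
      using leaf_disjoint_impl_impl[OF F_split G_split D E xy nxy nyx]
        leaf_fhybr_impl[OF D] leaf_fhybr_impl[OF E] by blast
  qed
qed

lemma fhybr_locally_strict_at:
  assumes F_strict: "locally_strict F" and G_strict: "\<forall>G \<in> \<phi>. locally_strict G"
    and x: "x \<in> tnodes Hy - tmax Hy"
  shows "locally_strict_at H x"
proof (cases "\<exists>G \<in> \<phi>. x \<in> tnodes (skel G) - tmax (skel G)")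
  case True
  then obtain G where G: "G \<in> \<phi>" "x \<in> tnodes (skel G) - tmax (skel G)" by blast
  have "locally_strict_at G x" using G_strict G unfolding locally_strict_iff by blast
  then show ?thesis
  proof (rule locally_strict_at_diff)
    show "sons (skel H) x = sons (skel G) x"
      using sons_hybr_graft[OF skel_graft[OF G(1)] G(2)] skel_fhybr by simp
    show "leaf H x = leaf G x - L" using leaf_fhybr_graft[OF G(1)] G(2) by blast
    show "leaf H s = leaf G s - L" if "s \<in> sons (skel G) x" for s
      using leaf_fhybr_graft[OF G(1)] that unfolding sons_def by blast
  qed
next
  case False
  have x_supp: "x \<in> S" using x False hybr_nodes implD by blast
  have not_root: "x \<notin> troot ` \<Gamma>" using False graft_root graft_root_notin_tmax by blast
  have "x \<in> tnodes T - tmax T"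
    using supp_nodes[OF x_supp] supp_nonmax_in_hybr[OF x_supp not_root] x by blast
  then have "locally_strict_at F x" using F_strict unfolding locally_strict_iff by blast
  then show ?thesis
  proof (rule locally_strict_at_diff)
    show "sons (skel H) x = sons T x" using sons_hybr_supp[OF x_supp not_root] skel_fhybr by simp
    show "leaf H x = leaf F x - L" by (rule leaf_fhybr_supp[OF x_supp])
    show "leaf H s = leaf F s - L" if "s \<in> sons T x" for s
      using leaf_fhybr_supp sons_supp_in_supp[OF x_supp not_root that] by blast
  qed
qed

lemma fhybr_locally_strict:
  "locally_strict F \<Longrightarrow> \<forall>G \<in> \<phi>. locally_strict G \<Longrightarrow> locally_strict H"
  unfolding locally_strict_iff[of H] skel_fhybr using fhybr_locally_strict_at by blast

lemma fruit_fhybr_subset_trace: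
  assumes B: "is_branch Hy B"
  shows "fruit H B \<subseteq> fruit F (trace B)"
proof
  fix q assume q: "q \<in> fruit H B"
  show "q \<in> fruit F (trace B)"
    unfolding fruit_def
  proof
    fix t assume "t \<in> trace B"
    then obtain b where b: "b \<in> B" "b \<in> S" "tle T t b" unfolding trace_def by blast
    then have "q \<in> leaf F b" using q leaf_fhybr_supp[OF b(2)] unfolding fruit_def by blast
    then show "q \<in> leaf F t" using leaf_antimono[OF b(3)] by blast
  qed
qed

text \<open>A point cut away by a graft \<open>E\<close> lies in the leaf of its root but not of the maximal
  nodes of \<open>E\<close>; by splittability the trace passes through that root, hence through a maximal node.\<close>

lemma fruit_trace_disjoint_loss:
  assumes F_split: "splittable F" and bc: "\<forall>G \<in> \<phi>. bounded_chains (skel G)"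
    and B: "is_branch Hy B" and p: "p \<in> fruit F (trace B)"
  shows "p \<notin> L"
proof
  assume "p \<in> L"
  then obtain E where E: "E \<in> \<phi>"
    and p_cut: "p \<in> leaf F (troot (skel E))" "p \<notin> leaf E (troot (skel E))"
    unfolding loss_def cut_def by blast
  have bc': "\<forall>g \<in> \<Gamma>. bounded_chains g" using bc by blast
  have "troot (skel E) \<in> trace B"
    using splittable_branch_contains[OF F_split is_branch_trace[OF bc' B] p]
      graft_root_node[OF skel_graft[OF E]] p_cut(1) by blast
  then obtain m where m: "m \<in> trace B" "m \<in> tmax (skel E)"
    using trace_graft_root_meets_tmax[OF bc' B skel_graft[OF E]] by blast
  have "p \<in> leaf E m" using p m graft_leaf_tmax[OF E m(2)] unfolding fruit_def by blast
  moreover have "leaf E m \<subseteq> leaf E (troot (skel E))"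
    using graft_root[OF skel_graft[OF E]] tmaxD[OF m(2)] graft_leaf_antimono[OF E] by blast
  ultimately show False using p_cut(2) by blast
qed

lemma fruit_trace_subset_fhybr:
  assumes F_split: "splittable F" and bc: "\<forall>G \<in> \<phi>. bounded_chains (skel G)"
    and B: "is_branch Hy B"
  shows "fruit F (trace B) \<subseteq> fruit H B"
proof
  fix p assume p: "p \<in> fruit F (trace B)"
  have p_trace: "p \<in> leaf F t" if "t \<in> trace B" for t using p that unfolding fruit_def by blast
  have p_loss: "p \<notin> L" by (rule fruit_trace_disjoint_loss[OF F_split bc B p])
  show "p \<in> fruit H B"
    unfolding fruit_def
  proof
    fix x assume x: "x \<in> B"
    show "p \<in> leaf H x"
    proof (rule fhybr_node_cases[OF is_branch_nodes[OF B x]])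
      assume "x \<in> S"
      then show ?thesis using leaf_fhybr_supp p_trace[OF trace_supp[OF x]] p_loss by blast
    next
      fix G assume G: "G \<in> \<phi>" and x_impl: "x \<in> impl (skel G)"
      obtain m where m: "m \<in> B" "m \<in> tmax (skel G)" "tless (skel G) x m"
        using branch_impl_below_tmax[OF _ B skel_graft[OF G] x x_impl] bc by blast
      have "p \<in> leaf F m"
        using p_trace trace_supp[OF m(1) graft_tmax_supp[OF skel_graft[OF G] m(2)]] by blast
      moreover have "tle T m m" using tle_refl graft_tmax[OF skel_graft[OF G] m(2)] by blast
      ultimately have "p \<in> leaf G x" using graft_leaf_above_tmax[OF G m(2,3)] by blast
      then show ?thesis using leaf_fhybr_impl[OF G x_impl] p_loss by blast
    qed
  qed
qed

lemma fhybr_complete: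
  assumes F_complete: "complete F" and F_split: "splittable F"
    and bc: "\<forall>G \<in> \<phi>. bounded_chains (skel G)"
  shows "complete H"
  unfolding complete_def skel_fhybr
proof (intro conjI allI impI)
  show "tnodes Hy \<noteq> {}" using hybr_nonempty F_complete unfolding complete_def by blast
  fix B assume B: "is_branch Hy B"
  have "fruit F (trace B) \<noteq> {}"
    using F_complete is_branch_trace[OF _ B] bc unfolding complete_def by blast
  then show "fruit H B \<noteq> {}" using fruit_trace_subset_fhybr[OF F_split bc B] by blast
qed

lemma fhybr_strict_branches:
  assumes F_strict: "strict_branches F" and F_split: "splittable F"
    and bc: "\<forall>G \<in> \<phi>. bounded_chains (skel G)"
  shows "strict_branches H"
  unfolding strict_branches_def skel_fhybr
proof (intro conjI allI impI)
  show "tnodes Hy \<noteq> {}" using hybr_nonempty F_strict unfolding strict_branches_def by blast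
  fix B assume B: "is_branch Hy B"
  obtain p where "fruit F (trace B) = {p}"
    using F_strict is_branch_trace[OF _ B] bc unfolding strict_branches_def by blast
  then show "\<exists>p. fruit H B = {p}"
    using fruit_trace_subset_fhybr[OF F_split bc B] fruit_fhybr_subset_trace[OF B] by blast
qed

end

theorem mainTheorem10:
  fixes F :: "('n, 'a) ftree" and \<phi> :: "('n, 'a) ftree set"
  assumes "foliage_tree F" and "nonincreasing F" and "consistent_fgrafts F \<phi>"
  shows "nonincreasing (fhybr F \<phi>) \<and>
    (splittable F \<and> (\<forall>G \<in> \<phi>. splittable G) \<longrightarrow> splittable (fhybr F \<phi>)) \<and>
    (locally_strict F \<and> (\<forall>G \<in> \<phi>. locally_strict G) \<longrightarrow> locally_strict (fhybr F \<phi>)) \<and>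
    (complete F \<and> splittable F \<and> (\<forall>G \<in> \<phi>. bounded_chains (skel G))
       \<longrightarrow> complete (fhybr F \<phi>)) \<and>
    (strict_branches F \<and> splittable F \<and> (\<forall>G \<in> \<phi>. bounded_chains (skel G))
       \<longrightarrow> strict_branches (fhybr F \<phi>)) \<and>
    (\<forall>X :: 'a topology. open_in X F \<and> (\<forall>G \<in> \<phi>. open_in X G)
       \<longrightarrow> open_in (subtopology X (topspace X - loss F \<phi>)) (fhybr F \<phi>))"
proof -
  interpret foliage_hybrid F \<phi> using assms by unfold_locales
  show ?thesis
    using fhybr_nonincreasing fhybr_splittable fhybr_locally_strict fhybr_complete
      fhybr_strict_branches fhybr_open_in by blast
qed

end
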